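(* Let $\mathcal S$ be a convex Sawtooth model with $n$ upper particles, let $1\le s\le r$ and $t\in[0,1]$. Then $x\mapsto F_{X_s\mid X_r=x}(t)$ is nonincreasing (for $r\le n+1$) and $y\mapsto F_{X_s\mid Y_r=y}(t)$ is nonincreasing (for $r\le n$). Moreover, for $r\le n$ and all $x,y\in[0,1]$, $$F^{\mathcal S_{\to X_r}}_{X_s}(t)\le F_{X_s\mid Y_r=y}(t)\qquad\text{and}\qquad F^{\mathcal S_{\to Y_r}}_{X_s}(t)\ge F_{X_s\mid X_{r+1}=x}(t).$$
   Context: A (type $--$) Sawtooth model with $n\ge1$ upper particles is specified by functions $f_1,g_1,\dots,f_n,g_n:[0,1]\to[0,\infty)$, each nondecreasing, $C^1$ and not identically zero. It is the probability space $[0,1]^{n+1}\times[0,1]^n$ with probability density at $(x_1,\dots,x_{n+1},y_1,\dots,y_n)$ equal to $\frac{1}{\mathcal V}\prod_{i=1}^n\mathbf 1_{\{x_i\le y_i\}}\mathbf 1_{\{x_{i+1}\le y_i\}}f_i(y_i-x_i)\,g_i(y_i-x_{i+1})$, $\mathcal V$ being the normalizing constant. The coordinates $X_1,\dots,X_{n+1}$ are the lower particles and $Y_1,\dots,Y_n$ the upper particles (ordered $X_1,Y_1,X_2,\dots,Y_n,X_{n+1}$). The model is convex if every $f_i,g_i$ is positive on $(0,1]$ and log-concave, i.e. $f_i'/f_i$ and $g_i'/g_i$ are nonincreasing. Conditional cumulative distribution functions $F_{U\mid V=v}(t)=\mathbb P(U\le t\mid V=v)$ are computed from the joint density. For a particle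 $P$, $\mathcal S_{\to P}$ is the model obtained by keeping only the particles from $X_1$ up to $P$ and the interaction factors among them (if $P=Y_r$ the last factor is $f_r(y_r-x_r)$); $F^{\mathcal S_{\to P}}_U$ is the cumulative distribution function of particle $U$ in $\mathcal S_{\to P}$. *)

theory Defs
  imports "HOL-Analysis.Analysis"
begin

text \<open>Particles of a Sawtooth model: lower particles XP i (i = 1..n+1) and upper particles
  YP i (i = 1..n). A configuration is a map from particles to positions.\<close>
datatype particle = XP nat | YP nat

text \<open>The full model with n upper particles is \<open>sw_parts n False\<close>;
  the model S_(->X_r) is \<open>sw_parts (r-1) False\<close> and S_(->Y_r) is \<open>sw_parts (r-1) True\<close>.\<close>
definition sw_parts :: "nat \<Rightarrow> bool \<Rightarrow> particle set" where
  "sw_parts m h = XP ` {1..m+1} \<union> YP ` {1..m} \<union> (if h then {YP (m+1)} else {})"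

text \<open>Unnormalised density (w.r.t. Lebesgue measure on the coordinates in \<open>sw_parts m h\<close>).\<close>
definition sw_dens ::
  "(nat \<Rightarrow> real \<Rightarrow> real) \<Rightarrow> (nat \<Rightarrow> real \<Rightarrow> real) \<Rightarrow> nat \<Rightarrow> bool \<Rightarrow> (particle \<Rightarrow> real) \<Rightarrow> real" where
  "sw_dens f g m h z =
     (\<Prod>p\<in>sw_parts m h. indicator {0..1} (z p)) *
     (\<Prod>i\<in>{1..m}. (if z (XP i) \<le> z (YP i) \<and> z (XP (i+1)) \<le> z (YP i)
                      then f i (z (YP i) - z (XP i)) * g i (z (YP i) - z (XP (i+1))) else 0)) *
     (if h then (if z (XP (m+1)) \<le> z (YP (m+1)) then f (m+1) (z (YP (m+1)) - z (XP (m+1))) else 0)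
      else 1)"

definition sw_mass ::
  "(nat \<Rightarrow> real \<Rightarrow> real) \<Rightarrow> (nat \<Rightarrow> real \<Rightarrow> real) \<Rightarrow> nat \<Rightarrow> bool \<Rightarrow> real" where
  "sw_mass f g m h = (\<integral>z. sw_dens f g m h z \<partial>(PiM (sw_parts m h) (\<lambda>_. lborel)))"

definition sw_cdf ::
  "(nat \<Rightarrow> real \<Rightarrow> real) \<Rightarrow> (nat \<Rightarrow> real \<Rightarrow> real) \<Rightarrow> nat \<Rightarrow> bool \<Rightarrow> particle \<Rightarrow> real \<Rightarrow> real" where
  "sw_cdf f g m h U t =
     (\<integral>z. indicator {..t} (z U) * sw_dens f g m h z \<partial>(PiM (sw_parts m h) (\<lambda>_. lborel)))
     / sw_mass f g m h"

definition sw_marg ::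
  "(nat \<Rightarrow> real \<Rightarrow> real) \<Rightarrow> (nat \<Rightarrow> real \<Rightarrow> real) \<Rightarrow> nat \<Rightarrow> bool \<Rightarrow> particle \<Rightarrow> real \<Rightarrow> real" where
  "sw_marg f g m h V v =
     (\<integral>z. sw_dens f g m h (z(V := v)) \<partial>(PiM (sw_parts m h - {V}) (\<lambda>_. lborel)))"

definition sw_cond_cdf ::
  "(nat \<Rightarrow> real \<Rightarrow> real) \<Rightarrow> (nat \<Rightarrow> real \<Rightarrow> real) \<Rightarrow> nat \<Rightarrow> bool \<Rightarrow> particle \<Rightarrow> particle \<Rightarrow> real \<Rightarrow> real \<Rightarrow> real" where
  "sw_cond_cdf f g m h U V v t =
     (\<integral>z. indicator {..t} ((z(V := v)) U) * sw_dens f g m h (z(V := v))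
        \<partial>(PiM (sw_parts m h - {V}) (\<lambda>_. lborel)))
     / sw_marg f g m h V v"

definition sw_admissible :: "(real \<Rightarrow> real) \<Rightarrow> bool" where
  "sw_admissible \<phi> \<longleftrightarrow>
     (\<forall>x\<in>{0..1}. \<phi> x \<ge> 0) \<and> mono_on {0..1} \<phi> \<and> (\<exists>x\<in>{0..1}. \<phi> x \<noteq> 0) \<and>
     (\<exists>\<phi>'. (\<forall>x\<in>{0..1}. (\<phi> has_real_derivative \<phi>' x) (at x within {0..1})) \<and> continuous_on {0..1} \<phi>')"

text \<open>Convexity condition: positive on (0,1] and log-concave (\<phi>'/\<phi> nonincreasing on (0,1]).\<close>
definition sw_logconcave :: "(real \<Rightarrow> real) \<Rightarrow> bool" where
  "sw_logconcave \<phi> \<longleftrightarrow>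
     (\<forall>x\<in>{0<..1}. \<phi> x > 0) \<and>
     (\<exists>\<phi>'. (\<forall>x\<in>{0..1}. (\<phi> has_real_derivative \<phi>' x) (at x within {0..1})) \<and>
           antimono_on {0<..1} (\<lambda>x. \<phi>' x / \<phi> x))"

definition convex_sawtooth :: "(nat \<Rightarrow> real \<Rightarrow> real) \<Rightarrow> (nat \<Rightarrow> real \<Rightarrow> real) \<Rightarrow> nat \<Rightarrow> bool" where
  "convex_sawtooth f g n \<longleftrightarrow> n \<ge> 1 \<and>
     (\<forall>i\<in>{1..n}. sw_admissible (f i) \<and> sw_admissible (g i) \<and>
                  sw_logconcave (f i) \<and> sw_logconcave (g i))"

end

theory Submission
  imports Defs
begin

text \<open>The Sawtooth density is a Markov chain along \<open>X\<^sub>1, Y\<^sub>1, X\<^sub>2, \<dots>\<close> whose transition kernels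
  \<open>f\<^sub>i (y - x)\<close>, \<open>g\<^sub>i (y - x)\<close> are totally positive of order 2 by log-concavity.
  The conditional CDF of \<open>X\<^sub>s\<close> given that a later particle sits at \<open>v\<close> is the ratio of the forward
  densities at \<open>v\<close> with and without the cut \<open>X\<^sub>s \<le> t\<close> (the backward factor cancels). At \<open>X\<^sub>s\<close> this
  ratio is the nonincreasing indicator of \<open>{.. t}\<close>, and integrating against TP2 kernels keeps it
  nonincreasing, which gives the monotonicity. Conditioning instead on the particle right after a
  truncation point reweights the truncated model by a kernel monotone in its last particle, and
  Chebyshev's inequality for densities in likelihood ratio order yields the two comparisons.\<close>

section \<open>Products of integrals and the likelihood ratio order\<close>

lemma ennreal_rearrangement:
  fixes x y p q :: ennreal
  assumes "y \<le> x" "q \<le> p"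
  shows "x * q + y * p \<le> x * p + y * q"
proof -
  obtain d where d: "x = y + d" using assms(1) by (auto simp: le_iff_add)
  obtain e where e: "p = q + e" using assms(2) by (auto simp: le_iff_add)
  have "x * q + y * p = y * q + y * q + y * e + d * q" unfolding d e by (simp add: algebra_simps)
  also have "\<dots> \<le> y * q + y * q + y * e + d * q + d * e" by simp
  also have "\<dots> = x * p + y * q" unfolding d e by (simp add: algebra_simps)
  finally show ?thesis .
qed

lemma enn2real_ratio_le:
  fixes a b c d :: ennreal
  assumes "a * d \<le> c * b" "a \<le> b" "c \<le> d" "0 < enn2real d"
  shows "enn2real a / enn2real b \<le> enn2real c / enn2real d"
proof (cases "b = top \<or> enn2real b = 0")
  case True
  then show ?thesis by auto
next
  case False
  then have "b \<noteq> top" "0 < enn2real b" by (auto simp: less_le)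
  moreover have "d \<noteq> top" using assms(4) by auto
  ultimately have fin: "a \<noteq> top" "c \<noteq> top" using assms(2,3) by (auto simp: top_unique)
  have "enn2real (a * d) \<le> enn2real (c * b)"
    using assms(1) by (rule enn2real_mono) (use fin \<open>b \<noteq> top\<close> in \<open>simp add: ennreal_mult_eq_top_iff less_top[symmetric]\<close>)
  then have "enn2real a * enn2real d \<le> enn2real c * enn2real b" by (simp add: enn2real_mult)
  then show ?thesis using \<open>0 < enn2real b\<close> assms(4) by (simp add: divide_simps mult.commute)
qed

lemma nn_integral_times_nn_integral:
  fixes a b :: "real \<Rightarrow> ennreal"
  assumes [measurable]: "a \<in> borel_measurable lborel" "b \<in> borel_measurable lborel"
  shows "(\<integral>\<^sup>+u. a u \<partial>lborel) * (\<integral>\<^sup>+w. b w \<partial>lborel) = (\<integral>\<^sup>+u. \<integral>\<^sup>+w. a u * b w \<partial>lborel \<partial>lborel)"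
  by (subst nn_integral_multc[symmetric]) (measurable, auto intro!: nn_integral_cong simp: nn_integral_cmult)

lemma nn_integral_symmetrize:
  fixes H :: "real \<Rightarrow> real \<Rightarrow> ennreal"
  assumes [measurable]: "case_prod H \<in> borel_measurable (lborel \<Otimes>\<^sub>M lborel)"
  shows "(\<integral>\<^sup>+u. \<integral>\<^sup>+w. H u w \<partial>lborel \<partial>lborel)
       = (\<integral>\<^sup>+u. \<integral>\<^sup>+w. (if u < w then H u w + H w u else 0) \<partial>lborel \<partial>lborel)"
proof -
  have [measurable]: "(\<lambda>(x, y). H y x) \<in> borel_measurable (lborel \<Otimes>\<^sub>M lborel)"
    using measurable_pair_swap[OF assms] by (simp add: case_prod_beta)
  have "(\<integral>\<^sup>+w. H u w \<partial>lborel)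
      = (\<integral>\<^sup>+w. (if u < w then H u w else 0) \<partial>lborel) + (\<integral>\<^sup>+w. (if w < u then H u w else 0) \<partial>lborel)"
    for u :: real
  proof -
    have "(\<integral>\<^sup>+w. H u w \<partial>lborel) = (\<integral>\<^sup>+w. (if u < w then H u w else 0) + (if w < u then H u w else 0) \<partial>lborel)"
      by (intro nn_integral_cong_AE) (use AE_lborel_singleton[of u] in \<open>auto elim!: eventually_mono\<close>)
    then show ?thesis by (simp add: nn_integral_add)
  qed
  then have "(\<integral>\<^sup>+u. \<integral>\<^sup>+w. H u w \<partial>lborel \<partial>lborel)
      = (\<integral>\<^sup>+u. \<integral>\<^sup>+w. (if u < w then H u w else 0) \<partial>lborel \<partial>lborel)
        + (\<integral>\<^sup>+u. \<integral>\<^sup>+w. (if w < u then H u w else 0) \<partial>lborel \<partial>lborel)"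
    by (simp add: nn_integral_add)
  also have "(\<integral>\<^sup>+u. \<integral>\<^sup>+w. (if w < u then H u w else 0) \<partial>lborel \<partial>lborel)
      = (\<integral>\<^sup>+u. \<integral>\<^sup>+w. (if u < w then H w u else 0) \<partial>lborel \<partial>lborel)"
    by (rule lborel_pair.Fubini'[symmetric]) measurable
  also have "(\<integral>\<^sup>+u. \<integral>\<^sup>+w. (if u < w then H u w else 0) \<partial>lborel \<partial>lborel)
        + (\<integral>\<^sup>+u. \<integral>\<^sup>+w. (if u < w then H w u else 0) \<partial>lborel \<partial>lborel)
      = (\<integral>\<^sup>+u. \<integral>\<^sup>+w. (if u < w then H u w + H w u else 0) \<partial>lborel \<partial>lborel)"
    by (simp add: nn_integral_add[symmetric] if_distrib cong: if_cong)
  finally show ?thesis .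
qed

text \<open>Both products of integrals are double integrals; comparing them it suffices to compare
  the integrands symmetrized over the pairs \<open>u < w\<close>.\<close>
lemma nn_integral_times_le_by_pairs:
  fixes a b c d :: "real \<Rightarrow> ennreal"
  assumes [measurable]: "a \<in> borel_measurable lborel" "b \<in> borel_measurable lborel"
    "c \<in> borel_measurable lborel" "d \<in> borel_measurable lborel"
    and pairs: "\<And>u w. u < w \<Longrightarrow> a u * b w + a w * b u \<le> c u * d w + c w * d u"
  shows "(\<integral>\<^sup>+u. a u \<partial>lborel) * (\<integral>\<^sup>+u. b u \<partial>lborel) \<le> (\<integral>\<^sup>+u. c u \<partial>lborel) * (\<integral>\<^sup>+u. d u \<partial>lborel)"
proof -
  have "(\<integral>\<^sup>+u. a u \<partial>lborel) * (\<integral>\<^sup>+u. b u \<partial>lborel)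
      = (\<integral>\<^sup>+u. \<integral>\<^sup>+w. (if u < w then a u * b w + a w * b u else 0) \<partial>lborel \<partial>lborel)"
    unfolding nn_integral_times_nn_integral[OF assms(1,2)]
    by (rule nn_integral_symmetrize[where H="\<lambda>u w. a u * b w"]) measurable
  also have "\<dots> \<le> (\<integral>\<^sup>+u. \<integral>\<^sup>+w. (if u < w then c u * d w + c w * d u else 0) \<partial>lborel \<partial>lborel)"
    by (intro nn_integral_mono) (simp add: pairs)
  also have "\<dots> = (\<integral>\<^sup>+u. c u \<partial>lborel) * (\<integral>\<^sup>+u. d u \<partial>lborel)"
    unfolding nn_integral_times_nn_integral[OF assms(3,4)]
    by (rule nn_integral_symmetrize[where H="\<lambda>u w. c u * d w", symmetric]) measurable
  finally show ?thesis .
qed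

text \<open>\<open>ratio_antimono A B\<close> says that \<open>A / B\<close> is nonincreasing, written without division
  (the likelihood ratio order).\<close>
definition ratio_antimono :: "(real \<Rightarrow> ennreal) \<Rightarrow> (real \<Rightarrow> ennreal) \<Rightarrow> bool" where
  "ratio_antimono A B \<longleftrightarrow> (\<forall>u w. u \<le> w \<longrightarrow> A w * B u \<le> A u * B w)"

lemma ratio_antimono_mult:
  assumes "ratio_antimono A B"
  shows "ratio_antimono (\<lambda>v. A v * h v) (\<lambda>v. B v * h v)"
  unfolding ratio_antimono_def
proof (intro allI impI)
  fix u w :: real assume "u \<le> w"
  then have "A w * B u * (h u * h w) \<le> A u * B w * (h u * h w)"
    using assms unfolding ratio_antimono_def by (intro mult_right_mono) auto
  then show "A w * h w * (B u * h u) \<le> A u * h u * (B w * h w)" by (simp add: mult_ac)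
qed

lemma ratio_antimono_kernel_integral:
  fixes A B :: "real \<Rightarrow> ennreal" and K :: "real \<Rightarrow> real \<Rightarrow> real"
  assumes [measurable]: "A \<in> borel_measurable lborel" "B \<in> borel_measurable lborel"
    "case_prod K \<in> borel_measurable (lborel \<Otimes>\<^sub>M lborel)"
    and K_nonneg: "\<And>u v. 0 \<le> K u v"
    and AB: "ratio_antimono A B"
    and TP2: "\<And>u w v v'. u \<le> w \<Longrightarrow> v \<le> v' \<Longrightarrow> K u v' * K w v \<le> K u v * K w v'"
  shows "ratio_antimono (\<lambda>v. \<integral>\<^sup>+u. ennreal (K u v) * A u \<partial>lborel) (\<lambda>v. \<integral>\<^sup>+u. ennreal (K u v) * B u \<partial>lborel)"
  unfolding ratio_antimono_def
proof (intro allI impI nn_integral_times_le_by_pairs)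
  fix v v' u w :: real assume "v \<le> v'" "u < w"
  have "A w * B u \<le> A u * B w" using AB \<open>u < w\<close> unfolding ratio_antimono_def by auto
  moreover have "ennreal (K u v' * K w v) \<le> ennreal (K u v * K w v')"
    using TP2[of u w v v'] \<open>u < w\<close> \<open>v \<le> v'\<close> by (intro ennreal_leI) auto
  ultimately have "A u * B w * ennreal (K u v' * K w v) + A w * B u * ennreal (K u v * K w v')
      \<le> A u * B w * ennreal (K u v * K w v') + A w * B u * ennreal (K u v' * K w v)"
    by (rule ennreal_rearrangement)
  then show "ennreal (K u v') * A u * (ennreal (K w v) * B w) + ennreal (K w v') * A w * (ennreal (K u v) * B u)
      \<le> ennreal (K u v) * A u * (ennreal (K w v') * B w) + ennreal (K w v) * A w * (ennreal (K u v') * B u)"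
    using K_nonneg by (simp add: ennreal_mult mult_ac)
qed measurable

lemma chebyshev_antimono_weight:
  fixes A B p :: "real \<Rightarrow> ennreal"
  assumes [measurable]: "A \<in> borel_measurable lborel" "B \<in> borel_measurable lborel" "p \<in> borel_measurable lborel"
    and AB: "ratio_antimono A B"
    and support: "\<And>u. u \<notin> {0..1} \<Longrightarrow> A u = 0 \<and> B u = 0"
    and p_antimono: "\<And>u w. 0 \<le> u \<Longrightarrow> u < w \<Longrightarrow> w \<le> 1 \<Longrightarrow> p w \<le> p u"
  shows "(\<integral>\<^sup>+u. A u \<partial>lborel) * (\<integral>\<^sup>+u. p u * B u \<partial>lborel) \<le> (\<integral>\<^sup>+u. p u * A u \<partial>lborel) * (\<integral>\<^sup>+u. B u \<partial>lborel)"
proof (rule nn_integral_times_le_by_pairs)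
  fix u w :: real assume "u < w"
  show "A u * (p w * B w) + A w * (p u * B u) \<le> p u * A u * B w + p w * A w * B u"
  proof (cases "u \<in> {0..1} \<and> w \<in> {0..1}")
    case True
    have "A w * B u \<le> A u * B w" using AB \<open>u < w\<close> unfolding ratio_antimono_def by auto
    moreover have "p w \<le> p u" using True \<open>u < w\<close> by (intro p_antimono) auto
    ultimately have "A u * B w * p w + A w * B u * p u \<le> A u * B w * p u + A w * B u * p w"
      by (rule ennreal_rearrangement)
    then show ?thesis by (simp add: mult_ac)
  next
    case False
    then have "(A u = 0 \<and> B u = 0) \<or> (A w = 0 \<and> B w = 0)" using support by blast
    then show ?thesis by auto
  qed
qed measurable

lemma chebyshev_mono_weight:
  fixes A B p :: "real \<Rightarrow> ennreal"
  assumes [measurable]: "A \<in> borel_measurable lborel" "B \<in> borel_measurable lborel" "p \<in> borel_measurable lborel"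
    and AB: "ratio_antimono A B"
    and support: "\<And>u. u \<notin> {0..1} \<Longrightarrow> A u = 0 \<and> B u = 0"
    and p_mono: "\<And>u w. 0 \<le> u \<Longrightarrow> u < w \<Longrightarrow> w \<le> 1 \<Longrightarrow> p u \<le> p w"
  shows "(\<integral>\<^sup>+u. p u * A u \<partial>lborel) * (\<integral>\<^sup>+u. B u \<partial>lborel) \<le> (\<integral>\<^sup>+u. A u \<partial>lborel) * (\<integral>\<^sup>+u. p u * B u \<partial>lborel)"
proof (rule nn_integral_times_le_by_pairs)
  fix u w :: real assume "u < w"
  show "p u * A u * B w + p w * A w * B u \<le> A u * (p w * B w) + A w * (p u * B u)"
  proof (cases "u \<in> {0..1} \<and> w \<in> {0..1}")
    case True
    have "A w * B u \<le> A u * B w" using AB \<open>u < w\<close> unfolding ratio_antimono_def by auto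
    moreover have "p u \<le> p w" using True \<open>u < w\<close> by (intro p_mono) auto
    ultimately have "A u * B w * p u + A w * B u * p w \<le> A u * B w * p w + A w * B u * p u"
      by (rule ennreal_rearrangement)
    then show ?thesis by (simp add: mult_ac)
  next
    case False
    then have "(A u = 0 \<and> B u = 0) \<or> (A w = 0 \<and> B w = 0)" using support by blast
    then show ?thesis by auto
  qed
qed measurable

section \<open>Log-concave interaction functions\<close>

definition on_unit :: "(real \<Rightarrow> real) \<Rightarrow> real \<Rightarrow> real" where
  "on_unit \<phi> x = (if x \<in> {0..1} then \<phi> x else 0)"

lemma on_unit_nonneg: "sw_admissible \<phi> \<Longrightarrow> 0 \<le> on_unit \<phi> x"
  unfolding on_unit_def sw_admissible_def by auto

lemma on_unit_measurable:
  assumes "sw_admissible \<phi>"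
  shows "on_unit \<phi> \<in> borel_measurable borel"
proof -
  obtain \<phi>' where "\<And>x. x \<in> {0..1} \<Longrightarrow> (\<phi> has_real_derivative \<phi>' x) (at x within {0..1})"
    using assms unfolding sw_admissible_def by blast
  then have "continuous_on {0..1} \<phi>" by (rule DERIV_continuous_on)
  moreover have "on_unit \<phi> = (\<lambda>x. indicator {0..1} x *\<^sub>R \<phi> x)"
    unfolding on_unit_def by (auto simp: indicator_def)
  ultimately show ?thesis using borel_measurable_continuous_on_indicator[of "{0..1}" \<phi>] by simp
qed

lemma on_unit_bounded:
  assumes "sw_admissible \<phi>"
  shows "\<exists>M. \<forall>x. on_unit \<phi> x \<le> M"
proof -
  obtain \<phi>' where "\<And>x. x \<in> {0..1} \<Longrightarrow> (\<phi> has_real_derivative \<phi>' x) (at x within {0..1})"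
    using assms unfolding sw_admissible_def by blast
  then have "continuous_on {0..1} \<phi>" by (rule DERIV_continuous_on)
  obtain x0 where "\<forall>y\<in>{0..1}. \<phi> y \<le> \<phi> x0"
    using continuous_attains_sup[OF compact_Icc _ \<open>continuous_on {0..1} \<phi>\<close>] by auto
  then have "\<forall>x. on_unit \<phi> x \<le> max 0 (\<phi> x0)" unfolding on_unit_def by (auto simp: le_max_iff_disj)
  then show ?thesis by blast
qed

lemma on_unit_shift_antimono:
  assumes "sw_admissible \<phi>" "0 \<le> u" "u \<le> w" "y \<le> 1"
  shows "on_unit \<phi> (y - w) \<le> on_unit \<phi> (y - u)"
proof (cases "y - w \<in> {0..1}")
  case True
  then have "y - u \<in> {0..1}" using assms by auto
  moreover have "\<phi> (y - w) \<le> \<phi> (y - u)"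
    using assms(1,3) True \<open>y - u \<in> {0..1}\<close> unfolding sw_admissible_def monotone_on_def by auto
  ultimately show ?thesis using True unfolding on_unit_def by auto
next
  case False
  then have "on_unit \<phi> (y - w) = 0" unfolding on_unit_def by (rule if_not_P)
  then show ?thesis using on_unit_nonneg[OF assms(1)] by simp
qed

lemma on_unit_shift_mono:
  assumes "sw_admissible \<phi>" "u \<le> w" "w \<le> 1" "0 \<le> x"
  shows "on_unit \<phi> (u - x) \<le> on_unit \<phi> (w - x)"
proof (cases "u - x \<in> {0..1}")
  case True
  then have "w - x \<in> {0..1}" using assms by auto
  moreover have "\<phi> (u - x) \<le> \<phi> (w - x)"
    using assms(1,2) True \<open>w - x \<in> {0..1}\<close> unfolding sw_admissible_def monotone_on_def by auto
  ultimately show ?thesis using True unfolding on_unit_def by auto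
next
  case False
  then have "on_unit \<phi> (u - x) = 0" unfolding on_unit_def by (rule if_not_P)
  then show ?thesis using on_unit_nonneg[OF assms(1)] by simp
qed

lemma ln_mean_value:
  fixes \<phi> \<phi>' :: "real \<Rightarrow> real"
  assumes der: "\<And>x. x \<in> {0..1} \<Longrightarrow> (\<phi> has_real_derivative \<phi>' x) (at x within {0..1})"
    and pos: "\<And>x. x \<in> {a..b} \<Longrightarrow> 0 < \<phi> x"
    and ab: "0 \<le> a" "a < b" "b \<le> 1"
  shows "\<exists>\<xi>\<in>{a<..<b}. ln (\<phi> b) - ln (\<phi> a) = \<phi>' \<xi> / \<phi> \<xi> * (b - a)"
proof -
  have "\<exists>\<xi>\<in>{a<..<b}. ln (\<phi> b) - ln (\<phi> a) = (\<lambda>x. (*) (\<phi>' x / \<phi> x)) \<xi> (b - a)"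
  proof (rule mvt_simple[OF ab(2)])
    fix x assume x: "a \<le> x" "x \<le> b"
    have d: "(\<phi> has_real_derivative \<phi>' x) (at x within {a..b})"
      by (rule DERIV_subset[OF der]) (use x ab in auto)
    have "((\<lambda>x. ln (\<phi> x)) has_real_derivative (1 / \<phi> x) * \<phi>' x) (at x within {a..b})"
      by (rule DERIV_chain2[OF DERIV_ln_divide d]) (use pos x in auto)
    then show "((\<lambda>x. ln (\<phi> x)) has_derivative (*) (\<phi>' x / \<phi> x)) (at x within {a..b})"
      by (simp add: has_field_derivative_def)
  qed
  then show ?thesis by auto
qed

text \<open>For \<open>d1 \<le> l \<le> u \<le> d2\<close> with \<open>l + u = d1 + d2\<close>: the log-increments over the equally
  long intervals \<open>[d1, l]\<close> and \<open>[u, d2]\<close> compare by the mean value theorem.\<close>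
lemma logconcave_on_unit_mult_le:
  assumes adm: "sw_admissible \<phi>" and lc: "sw_logconcave \<phi>"
    and bounds: "d1 \<le> a" "a \<le> d2" "d1 \<le> b" "b \<le> d2" "a + b = d1 + d2"
  shows "on_unit \<phi> d1 * on_unit \<phi> d2 \<le> on_unit \<phi> a * on_unit \<phi> b"
proof (cases "0 \<le> d1 \<and> d2 \<le> 1 \<and> \<phi> d1 \<noteq> 0")
  case False
  then have "on_unit \<phi> d1 * on_unit \<phi> d2 = 0" unfolding on_unit_def by auto
  then show ?thesis using on_unit_nonneg[OF adm] by (metis mult_nonneg_nonneg)
next
  case True
  obtain \<phi>' where der: "\<And>x. x \<in> {0..1} \<Longrightarrow> (\<phi> has_real_derivative \<phi>' x) (at x within {0..1})"
    and am: "antimono_on {0<..1} (\<lambda>x. \<phi>' x / \<phi> x)" and posi: "\<And>x. x \<in> {0<..1} \<Longrightarrow> 0 < \<phi> x"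
    using lc unfolding sw_logconcave_def by blast
  have "0 \<le> \<phi> d1" using adm True bounds unfolding sw_admissible_def by auto
  then have "0 < \<phi> d1" using True by auto
  then have pos: "0 < \<phi> x" if "d1 \<le> x" "x \<le> 1" for x
    using that True by (cases "x = d1") (auto intro: posi)
  have ordered: "\<phi> d1 * \<phi> d2 \<le> \<phi> l * \<phi> u"
    if lu: "d1 \<le> l" "l \<le> u" "u \<le> d2" "l + u = d1 + d2" for l u
  proof (cases "d1 = l")
    case False
    then have lt: "d1 < l" "u < d2" using lu by auto
    have pos1: "\<And>x. x \<in> {d1..l} \<Longrightarrow> 0 < \<phi> x" and pos2: "\<And>x. x \<in> {u..d2} \<Longrightarrow> 0 < \<phi> x"
      using pos lu True by auto
    obtain \<xi>1 where \<xi>1: "\<xi>1 \<in> {d1<..<l}" "ln (\<phi> l) - ln (\<phi> d1) = \<phi>' \<xi>1 / \<phi> \<xi>1 * (l - d1)"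
      using ln_mean_value[OF der pos1 _ lt(1)] lu True by auto
    obtain \<xi>2 where \<xi>2: "\<xi>2 \<in> {u<..<d2}" "ln (\<phi> d2) - ln (\<phi> u) = \<phi>' \<xi>2 / \<phi> \<xi>2 * (d2 - u)"
      using ln_mean_value[OF der pos2 _ lt(2)] lu True by auto
    have "\<phi>' \<xi>2 / \<phi> \<xi>2 \<le> \<phi>' \<xi>1 / \<phi> \<xi>1"
      using am \<xi>1(1) \<xi>2(1) lu True unfolding monotone_on_def by auto
    then have "\<phi>' \<xi>2 / \<phi> \<xi>2 * (l - d1) \<le> \<phi>' \<xi>1 / \<phi> \<xi>1 * (l - d1)"
      using lt by (intro mult_right_mono) auto
    moreover have "d2 - u = l - d1" using lu by linarith
    ultimately have "ln (\<phi> d1) + ln (\<phi> d2) \<le> ln (\<phi> l) + ln (\<phi> u)"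
      using \<xi>1(2) \<xi>2(2) by simp
    moreover have "0 < \<phi> d1" "0 < \<phi> d2" "0 < \<phi> l" "0 < \<phi> u" using pos lu True by auto
    ultimately have "ln (\<phi> d1 * \<phi> d2) \<le> ln (\<phi> l * \<phi> u)" by (simp add: ln_mult)
    then show ?thesis using \<open>0 < \<phi> d1\<close> \<open>0 < \<phi> d2\<close> \<open>0 < \<phi> l\<close> \<open>0 < \<phi> u\<close> by simp
  next
    case True
    then have "u = d2" using lu by linarith
    then show ?thesis using True by simp
  qed
  have "\<phi> d1 * \<phi> d2 \<le> \<phi> a * \<phi> b"
  proof (cases "a \<le> b")
    case True
    then show ?thesis using ordered[of a b] bounds by simp
  next
    case False
    then show ?thesis using ordered[of b a] bounds by (simp add: mult.commute)
  qed
  moreover have "d1 \<in> {0..1}" "d2 \<in> {0..1}" "a \<in> {0..1}" "b \<in> {0..1}" using True bounds by auto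
  ultimately show ?thesis unfolding on_unit_def by simp
qed

section \<open>Chains of particles\<close>

text \<open>The Sawtooth model is a Markov chain along the particles in the order
  \<open>X\<^sub>1, Y\<^sub>1, X\<^sub>2, Y\<^sub>2, \<dots>\<close>; \<open>sw_particle j\<close> is the \<open>j\<close>-th particle in this order, counting from 0.\<close>
definition sw_particle :: "nat \<Rightarrow> particle" where
  "sw_particle j = (if even j then XP (j div 2 + 1) else YP (j div 2 + 1))"

lemma sw_particle_eq_iff [simp]: "sw_particle i = sw_particle j \<longleftrightarrow> i = j"
  unfolding sw_particle_def by (auto split: if_splits) presburger+

lemma inj_sw_particle: "inj sw_particle"
  by (auto simp: inj_def)

lemma sw_particle_even [simp]: "sw_particle (2 * k) = XP (Suc k)"
  unfolding sw_particle_def by simp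

lemma sw_particle_odd [simp]: "sw_particle (Suc (2 * k)) = YP (Suc k)"
  unfolding sw_particle_def by simp

definition chain_dens ::
  "(nat \<Rightarrow> real \<Rightarrow> real) \<Rightarrow> (nat \<Rightarrow> real \<Rightarrow> real \<Rightarrow> real) \<Rightarrow> nat \<Rightarrow> (particle \<Rightarrow> real) \<Rightarrow> real" where
  "chain_dens W K N z =
     (\<Prod>j\<in>{0..N}. W j (z (sw_particle j))) * (\<Prod>j<N. K j (z (sw_particle j)) (z (sw_particle (Suc j))))"

definition chain_head ::
  "(nat \<Rightarrow> real \<Rightarrow> real) \<Rightarrow> (nat \<Rightarrow> real \<Rightarrow> real \<Rightarrow> real) \<Rightarrow> nat \<Rightarrow> (particle \<Rightarrow> real) \<Rightarrow> real" where
  "chain_head W K c z =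
     (\<Prod>j<c. W j (z (sw_particle j))) * (\<Prod>j<c. K j (z (sw_particle j)) (z (sw_particle (Suc j))))"

definition chain_tail ::
  "(nat \<Rightarrow> real \<Rightarrow> real) \<Rightarrow> (nat \<Rightarrow> real \<Rightarrow> real \<Rightarrow> real) \<Rightarrow> nat \<Rightarrow> nat \<Rightarrow> (particle \<Rightarrow> real) \<Rightarrow> real" where
  "chain_tail W K N c z =
     (\<Prod>j\<in>{Suc c..N}. W j (z (sw_particle j))) * (\<Prod>j\<in>{c..<N}. K j (z (sw_particle j)) (z (sw_particle (Suc j))))"

text \<open>\<open>fwd W K c v\<close> integrates the head of the chain before particle \<open>c\<close>, placed at \<open>v\<close>;
  \<open>bwd W K N d v\<close> integrates the last \<open>d\<close> particles, particle \<open>N - d\<close> being placed at \<open>v\<close>.\<close>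
fun fwd :: "(nat \<Rightarrow> real \<Rightarrow> real) \<Rightarrow> (nat \<Rightarrow> real \<Rightarrow> real \<Rightarrow> real) \<Rightarrow> nat \<Rightarrow> real \<Rightarrow> ennreal" where
  "fwd W K 0 v = 1"
| "fwd W K (Suc c) v = (\<integral>\<^sup>+u. ennreal (K c u v) * (ennreal (W c u) * fwd W K c u) \<partial>lborel)"

fun bwd :: "(nat \<Rightarrow> real \<Rightarrow> real) \<Rightarrow> (nat \<Rightarrow> real \<Rightarrow> real \<Rightarrow> real) \<Rightarrow> nat \<Rightarrow> nat \<Rightarrow> real \<Rightarrow> ennreal" where
  "bwd W K N 0 v = 1"
| "bwd W K N (Suc d) v = (\<integral>\<^sup>+w. ennreal (K (N - Suc d) v w) * (ennreal (W (N - d) w) * bwd W K N d w) \<partial>lborel)"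

definition fwd_dens :: "(nat \<Rightarrow> real \<Rightarrow> real) \<Rightarrow> (nat \<Rightarrow> real \<Rightarrow> real \<Rightarrow> real) \<Rightarrow> nat \<Rightarrow> real \<Rightarrow> ennreal" where
  "fwd_dens W K c v = fwd W K c v * ennreal (W c v)"

lemma fwd_Suc_fwd_dens: "fwd W K (Suc c) v = (\<integral>\<^sup>+u. ennreal (K c u v) * fwd_dens W K c u \<partial>lborel)"
  by (simp add: fwd_dens_def mult_ac)

lemma fwd_dens_Suc:
  "fwd_dens W K (Suc c) v = (\<integral>\<^sup>+u. ennreal (K c u v) * fwd_dens W K c u \<partial>lborel) * ennreal (W (Suc c) v)"
  unfolding fwd_dens_def[of W K "Suc c"] fwd_Suc_fwd_dens ..

lemma fwd_cong: "(\<And>j u. j < c \<Longrightarrow> W j u = W' j u) \<Longrightarrow> fwd W K c v = fwd W' K c v"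
proof (induction c arbitrary: v)
  case (Suc c)
  then show ?case by (simp add: less_Suc_eq)
qed simp

lemma fwd_mono: "(\<And>j u. W j u \<le> W' j u) \<Longrightarrow> fwd W K c v \<le> fwd W' K c v"
proof (induction c arbitrary: v)
  case (Suc c)
  show ?case
    by (simp, intro nn_integral_mono mult_left_mono mult_mono ennreal_leI Suc) auto
qed simp

lemma fwd_dens_mono: "(\<And>j u. W j u \<le> W' j u) \<Longrightarrow> fwd_dens W K c v \<le> fwd_dens W' K c v"
  unfolding fwd_dens_def by (intro mult_mono fwd_mono ennreal_leI) auto

lemma bwd_cong:
  "d \<le> N \<Longrightarrow> (\<And>j u. N - d < j \<Longrightarrow> W j u = W' j u) \<Longrightarrow> bwd W K N d v = bwd W' K N d v"
proof (induction d arbitrary: v)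
  case (Suc d)
  then have "bwd W K N d w = bwd W' K N d w" "W (N - d) w = W' (N - d) w" for w by auto
  then show ?case by simp
qed simp

lemma fwd_bounded:
  assumes K_bounded: "\<And>j. j < c \<Longrightarrow> \<exists>M. \<forall>u v. K j u v \<le> M"
    and W_le: "\<And>j u. W j u \<le> indicator {0..1} u"
  shows "\<exists>M. \<forall>v. fwd W K c v \<le> ennreal M"
  using K_bounded
proof (induction c)
  case 0
  then show ?case by (intro exI[of _ 1]) simp
next
  case (Suc c)
  then obtain M where M: "\<And>v. fwd W K c v \<le> ennreal M" by auto
  obtain Mk where Mk: "\<And>u v. K c u v \<le> Mk" using Suc.prems by blast
  have "fwd W K (Suc c) v \<le> ennreal (max 0 Mk * max 0 M)" for v
  proof -
    have bound: "ennreal (K c u v) * (ennreal (W c u) * fwd W K c u)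
        \<le> ennreal (max 0 Mk * max 0 M) * indicator {0..1} u" for u
    proof -
      have "ennreal (K c u v) * (ennreal (W c u) * fwd W K c u)
          \<le> ennreal (max 0 Mk) * (ennreal (indicator {0..1} u) * ennreal (max 0 M))"
        using Mk M W_le by (intro mult_mono' ennreal_leI order.trans[OF M]) (auto intro: max.coboundedI2)
      moreover have "ennreal (max 0 Mk) * (ennreal (indicator {0..1} u) * ennreal (max 0 M))
          = ennreal (max 0 Mk * max 0 M) * indicator {0..1} u"
        by (simp add: ennreal_mult ennreal_indicator mult_ac)
      ultimately show ?thesis by simp
    qed
    then have "fwd W K (Suc c) v \<le> (\<integral>\<^sup>+u. ennreal (max 0 Mk * max 0 M) * indicator {0..1::real} u \<partial>lborel)"
      unfolding fwd.simps by (intro nn_integral_mono bound)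
    then show ?thesis by (simp add: nn_integral_cmult_indicator)
  qed
  then show ?case by blast
qed

lemma fwd_dens_integral_finite:
  assumes "\<And>j. j < c \<Longrightarrow> \<exists>M. \<forall>u v. K j u v \<le> M" "\<And>j u. W j u \<le> indicator {0..1} u"
  shows "(\<integral>\<^sup>+v. fwd_dens W K c v \<partial>lborel) < top"
proof -
  obtain M where M: "\<And>v. fwd W K c v \<le> ennreal M" using fwd_bounded[of c K W, OF assms] by blast
  have bound: "fwd_dens W K c v \<le> ennreal M * indicator {0..1} v" for v
  proof -
    have "ennreal (W c v) \<le> indicator {0..1} v" using assms(2) by (metis ennreal_indicator ennreal_leI)
    then show ?thesis unfolding fwd_dens_def by (intro mult_mono' M) simp_all
  qed
  have "(\<integral>\<^sup>+v. fwd_dens W K c v \<partial>lborel) \<le> (\<integral>\<^sup>+v. ennreal M * indicator {0..1::real} v \<partial>lborel)"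
    by (intro nn_integral_mono bound)
  also have "\<dots> < top" by (simp add: nn_integral_cmult_indicator)
  finally show ?thesis .
qed

lemma chain_head_cong:
  "(\<And>j. j \<le> c \<Longrightarrow> z (sw_particle j) = z' (sw_particle j)) \<Longrightarrow> chain_head W K c z = chain_head W K c z'"
  unfolding chain_head_def by (intro arg_cong2[where f="(*)"] prod.cong) auto

lemma chain_head_Suc:
  "chain_head W K (Suc c) z
     = chain_head W K c z * (W c (z (sw_particle c)) * K c (z (sw_particle c)) (z (sw_particle (Suc c))))"
  unfolding chain_head_def by (simp add: algebra_simps)

lemma chain_head_Suc_upd:
  "chain_head W K (Suc c) ((x(sw_particle c := y))(sw_particle (Suc c) := v))
     = K c y v * W c y * chain_head W K c (x(sw_particle c := y))"
proof -
  have "chain_head W K c ((x(sw_particle c := y))(sw_particle (Suc c) := v)) = chain_head W K c (x(sw_particle c := y))"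
    by (rule chain_head_cong) auto
  then show ?thesis by (simp add: chain_head_Suc mult_ac)
qed

lemma chain_tail_cong:
  "(\<And>j. c \<le> j \<Longrightarrow> j \<le> N \<Longrightarrow> z (sw_particle j) = z' (sw_particle j)) \<Longrightarrow> chain_tail W K N c z = chain_tail W K N c z'"
  unfolding chain_tail_def by (intro arg_cong2[where f="(*)"] prod.cong) auto

lemma chain_tail_Suc:
  "c < N \<Longrightarrow> chain_tail W K N c z
     = W (Suc c) (z (sw_particle (Suc c))) * K c (z (sw_particle c)) (z (sw_particle (Suc c))) * chain_tail W K N (Suc c) z"
  unfolding chain_tail_def by (simp add: prod.atLeast_Suc_atMost prod.atLeast_Suc_lessThan algebra_simps)

lemma chain_tail_Suc_upd:
  assumes "c < N"
  shows "chain_tail W K N c ((x(sw_particle (Suc c) := y))(sw_particle c := v))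
     = K c v y * W (Suc c) y * chain_tail W K N (Suc c) (x(sw_particle (Suc c) := y))"
proof -
  have "chain_tail W K N (Suc c) ((x(sw_particle (Suc c) := y))(sw_particle c := v))
      = chain_tail W K N (Suc c) (x(sw_particle (Suc c) := y))"
    by (rule chain_tail_cong) auto
  then show ?thesis using assms by (simp add: chain_tail_Suc mult_ac)
qed

lemma chain_dens_split:
  assumes "c \<le> N"
  shows "chain_dens W K N z = chain_head W K c z * W c (z (sw_particle c)) * chain_tail W K N c z"
proof -
  have 1: "{0..N} = {..<c} \<union> ({c} \<union> {Suc c..N})" and 2: "{..<N} = {..<c} \<union> {c..<N}"
    using assms by auto
  have "(\<Prod>j\<in>{0..N}. W j (z (sw_particle j)))
        = (\<Prod>j<c. W j (z (sw_particle j))) * (W c (z (sw_particle c)) * (\<Prod>j\<in>{Suc c..N}. W j (z (sw_particle j))))"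
    unfolding 1 by (subst prod.union_disjoint; (subst prod.union_disjoint)?) auto
  moreover have "(\<Prod>j<N. K j (z (sw_particle j)) (z (sw_particle (Suc j))))
        = (\<Prod>j<c. K j (z (sw_particle j)) (z (sw_particle (Suc j)))) * (\<Prod>j\<in>{c..<N}. K j (z (sw_particle j)) (z (sw_particle (Suc j))))"
    unfolding 2 by (subst prod.union_disjoint) auto
  ultimately show ?thesis unfolding chain_dens_def chain_head_def chain_tail_def by (simp add: algebra_simps)
qed

lemma measurable_fun_upd_comp:
  assumes "F \<in> borel_measurable (PiM (insert i I) (\<lambda>_. lborel :: real measure))"
  shows "(\<lambda>x. F (x(i := y))) \<in> borel_measurable (PiM I (\<lambda>_. lborel :: real measure))"
proof -
  have "(\<lambda>x. x(i := y)) \<in> measurable (PiM I (\<lambda>_. lborel)) (PiM (insert i I) (\<lambda>_. lborel :: real measure))"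
    by (rule measurable_fun_upd[where J=I]) auto
  from measurable_comp[OF this assms] show ?thesis by (simp add: comp_def)
qed

interpretation lborel_product: product_sigma_finite "\<lambda>_. lborel :: real measure"
  by standard

locale chain_model =
  fixes W :: "nat \<Rightarrow> real \<Rightarrow> real" and K :: "nat \<Rightarrow> real \<Rightarrow> real \<Rightarrow> real" and N :: nat
  assumes W_measurable: "\<And>j. j \<le> N \<Longrightarrow> W j \<in> borel_measurable lborel"
    and K_measurable: "\<And>j. j < N \<Longrightarrow> case_prod (K j) \<in> borel_measurable (lborel \<Otimes>\<^sub>M lborel)"
    and W_nonneg: "\<And>j x. 0 \<le> W j x"
    and K_nonneg: "\<And>j x y. j < N \<Longrightarrow> 0 \<le> K j x y"
begin

lemma fwd_measurable: "c \<le> N \<Longrightarrow> fwd W K c \<in> borel_measurable lborel"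
proof (induction c)
  case (Suc c)
  then have "c < N" by simp
  then have [measurable]: "fwd W K c \<in> borel_measurable lborel" "W c \<in> borel_measurable lborel"
    "case_prod (K c) \<in> borel_measurable (lborel \<Otimes>\<^sub>M lborel)"
    using Suc.IH W_measurable K_measurable by auto
  show ?case by simp measurable
next
  case 0
  have "fwd W K 0 = (\<lambda>_. 1)" by auto
  then show ?case by simp
qed

lemma fwd_dens_measurable: "c \<le> N \<Longrightarrow> fwd_dens W K c \<in> borel_measurable lborel"
  unfolding fwd_dens_def using fwd_measurable W_measurable by measurable

lemma weight_measurable:
  "j \<le> N \<Longrightarrow> sw_particle j \<in> I \<Longrightarrow> (\<lambda>z. W j (z (sw_particle j))) \<in> borel_measurable (PiM I (\<lambda>_. lborel))"
  using measurable_compose[OF measurable_component_singleton[of "sw_particle j" I "\<lambda>_. lborel"] W_measurable[of j]]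
  by simp

lemma kernel_measurable:
  assumes "j < N" "sw_particle j \<in> I" "sw_particle (Suc j) \<in> I"
  shows "(\<lambda>z. K j (z (sw_particle j)) (z (sw_particle (Suc j)))) \<in> borel_measurable (PiM I (\<lambda>_. lborel))"
proof -
  have [measurable]: "case_prod (K j) \<in> borel_measurable (lborel \<Otimes>\<^sub>M lborel)" using assms(1) by (rule K_measurable)
  note [simp] = assms(2,3)
  show ?thesis by measurable
qed

lemma chain_head_measurable:
  assumes "c \<le> N" "sw_particle ` {..c} \<subseteq> I"
  shows "chain_head W K c \<in> borel_measurable (PiM I (\<lambda>_. lborel))"
  unfolding chain_head_def using assms
  by (intro borel_measurable_times borel_measurable_prod weight_measurable kernel_measurable) auto

lemma chain_tail_measurable:
  assumes "sw_particle ` {c..N} \<subseteq> I"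
  shows "chain_tail W K N c \<in> borel_measurable (PiM I (\<lambda>_. lborel))"
  unfolding chain_tail_def using assms
  by (intro borel_measurable_times borel_measurable_prod weight_measurable kernel_measurable) auto

lemma chain_dens_measurable:
  assumes "sw_particle ` {0..N} \<subseteq> I"
  shows "chain_dens W K N \<in> borel_measurable (PiM I (\<lambda>_. lborel))"
  unfolding chain_dens_def using assms
  by (intro borel_measurable_times borel_measurable_prod weight_measurable kernel_measurable) auto

lemma chain_head_nonneg: "c \<le> N \<Longrightarrow> 0 \<le> chain_head W K c z"
  unfolding chain_head_def using W_nonneg K_nonneg by (intro mult_nonneg_nonneg prod_nonneg) auto

lemma chain_tail_nonneg: "0 \<le> chain_tail W K N c z"
  unfolding chain_tail_def using W_nonneg K_nonneg by (intro mult_nonneg_nonneg prod_nonneg) auto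

lemma chain_dens_nonneg: "0 \<le> chain_dens W K N z"
  unfolding chain_dens_def using W_nonneg K_nonneg by (intro mult_nonneg_nonneg prod_nonneg) auto

lemma chain_head_integral:
  assumes "c \<le> N"
  shows "(\<integral>\<^sup>+z. ennreal (chain_head W K c (z(sw_particle c := v))) \<partial>PiM (sw_particle ` {..<c}) (\<lambda>_. lborel))
    = fwd W K c v"
  using assms
proof (induction c arbitrary: v)
  case 0
  then show ?case by (simp add: chain_head_def PiM_empty)
next
  case (Suc c)
  let ?I = "sw_particle ` {..<c}"
  have "c < N" using Suc.prems by simp
  have [measurable]: "chain_head W K (Suc c)
      \<in> borel_measurable (PiM (insert (sw_particle (Suc c)) (insert (sw_particle c) ?I)) (\<lambda>_. lborel))"
    using Suc.prems by (intro chain_head_measurable) (auto simp: le_Suc_eq le_less)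
  have [measurable]: "chain_head W K c \<in> borel_measurable (PiM (insert (sw_particle c) ?I) (\<lambda>_. lborel))"
    using Suc.prems by (intro chain_head_measurable) (auto simp: le_less)
  have "(\<integral>\<^sup>+z. ennreal (chain_head W K (Suc c) (z(sw_particle (Suc c) := v))) \<partial>PiM (sw_particle ` {..<Suc c}) (\<lambda>_. lborel))
      = (\<integral>\<^sup>+y. \<integral>\<^sup>+x. ennreal (chain_head W K (Suc c) ((x(sw_particle c := y))(sw_particle (Suc c) := v)))
           \<partial>PiM ?I (\<lambda>_. lborel) \<partial>lborel)"
    unfolding lessThan_Suc image_insert
  proof (rule lborel_product.product_nn_integral_insert_rev)
    show "(\<lambda>z. ennreal (chain_head W K (Suc c) (z(sw_particle (Suc c) := v))))
        \<in> borel_measurable (PiM (insert (sw_particle c) ?I) (\<lambda>_. lborel))"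
      by (rule measurable_fun_upd_comp[where F="\<lambda>z. ennreal (chain_head W K (Suc c) z)"]) measurable
  qed auto
  also have "\<dots> = (\<integral>\<^sup>+y. ennreal (K c y v) * (ennreal (W c y) * fwd W K c y) \<partial>lborel)"
  proof (intro nn_integral_cong)
    fix y :: real
    have [measurable]: "(\<lambda>x. ennreal (chain_head W K c (x(sw_particle c := y)))) \<in> borel_measurable (PiM ?I (\<lambda>_. lborel))"
      by (rule measurable_fun_upd_comp[where F="\<lambda>z. ennreal (chain_head W K c z)"]) measurable
    have "(\<integral>\<^sup>+x. ennreal (chain_head W K (Suc c) ((x(sw_particle c := y))(sw_particle (Suc c) := v))) \<partial>PiM ?I (\<lambda>_. lborel))
        = (\<integral>\<^sup>+x. ennreal (K c y v * W c y) * ennreal (chain_head W K c (x(sw_particle c := y))) \<partial>PiM ?I (\<lambda>_. lborel))"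
      using W_nonneg K_nonneg[OF \<open>c < N\<close>] chain_head_nonneg[of c] Suc.prems
      by (simp add: chain_head_Suc_upd ennreal_mult[symmetric])
    also have "\<dots> = ennreal (K c y v * W c y) * (\<integral>\<^sup>+x. ennreal (chain_head W K c (x(sw_particle c := y))) \<partial>PiM ?I (\<lambda>_. lborel))"
      by (rule nn_integral_cmult) measurable
    also have "\<dots> = ennreal (K c y v * W c y) * fwd W K c y"
      using Suc.prems by (subst Suc.IH) simp_all
    finally show "(\<integral>\<^sup>+x. ennreal (chain_head W K (Suc c) ((x(sw_particle c := y))(sw_particle (Suc c) := v))) \<partial>PiM ?I (\<lambda>_. lborel))
        = ennreal (K c y v) * (ennreal (W c y) * fwd W K c y)"
      using W_nonneg K_nonneg[OF \<open>c < N\<close>] by (simp add: ennreal_mult mult_ac)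
  qed
  finally show ?case by (simp add: fun_upd_def)
qed

lemma chain_tail_integral:
  assumes "c \<le> N"
  shows "(\<integral>\<^sup>+z. ennreal (chain_tail W K N c (z(sw_particle c := v))) \<partial>PiM (sw_particle ` {Suc c..N}) (\<lambda>_. lborel))
    = bwd W K N (N - c) v"
  using assms
proof (induction "N - c" arbitrary: c v)
  case 0
  then have "c = N" by simp
  then show ?case by (simp add: chain_tail_def PiM_empty)
next
  case (Suc d)
  then have "c < N" "N - Suc c = d" by auto
  let ?J = "sw_particle ` {Suc (Suc c)..N}"
  have ins: "sw_particle ` {Suc c..N} = insert (sw_particle (Suc c)) ?J"
    using \<open>c < N\<close> by (auto simp: atLeastAtMost_insertL[symmetric])
  have "{c..N} \<subseteq> insert c (insert (Suc c) {Suc (Suc c)..N})" by auto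
  then have [measurable]: "chain_tail W K N c
      \<in> borel_measurable (PiM (insert (sw_particle c) (insert (sw_particle (Suc c)) ?J)) (\<lambda>_. lborel))"
    by (intro chain_tail_measurable) blast
  have [measurable]: "chain_tail W K N (Suc c) \<in> borel_measurable (PiM (insert (sw_particle (Suc c)) ?J) (\<lambda>_. lborel))"
    unfolding ins[symmetric] by (intro chain_tail_measurable) auto
  have "(\<integral>\<^sup>+z. ennreal (chain_tail W K N c (z(sw_particle c := v))) \<partial>PiM (sw_particle ` {Suc c..N}) (\<lambda>_. lborel))
      = (\<integral>\<^sup>+y. \<integral>\<^sup>+x. ennreal (chain_tail W K N c ((x(sw_particle (Suc c) := y))(sw_particle c := v)))
           \<partial>PiM ?J (\<lambda>_. lborel) \<partial>lborel)"
    unfolding ins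
  proof (rule lborel_product.product_nn_integral_insert_rev)
    show "(\<lambda>z. ennreal (chain_tail W K N c (z(sw_particle c := v))))
        \<in> borel_measurable (PiM (insert (sw_particle (Suc c)) ?J) (\<lambda>_. lborel))"
      by (rule measurable_fun_upd_comp[where F="\<lambda>z. ennreal (chain_tail W K N c z)"]) measurable
  qed auto
  also have "\<dots> = (\<integral>\<^sup>+y. ennreal (K c v y) * (ennreal (W (Suc c) y) * bwd W K N d y) \<partial>lborel)"
  proof (intro nn_integral_cong)
    fix y :: real
    have [measurable]: "(\<lambda>x. ennreal (chain_tail W K N (Suc c) (x(sw_particle (Suc c) := y)))) \<in> borel_measurable (PiM ?J (\<lambda>_. lborel))"
      by (rule measurable_fun_upd_comp[where F="\<lambda>z. ennreal (chain_tail W K N (Suc c) z)"]) measurable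
    have "(\<integral>\<^sup>+x. ennreal (chain_tail W K N c ((x(sw_particle (Suc c) := y))(sw_particle c := v))) \<partial>PiM ?J (\<lambda>_. lborel))
        = (\<integral>\<^sup>+x. ennreal (K c v y * W (Suc c) y) * ennreal (chain_tail W K N (Suc c) (x(sw_particle (Suc c) := y))) \<partial>PiM ?J (\<lambda>_. lborel))"
      using W_nonneg K_nonneg[OF \<open>c < N\<close>] chain_tail_nonneg \<open>c < N\<close>
      by (simp add: chain_tail_Suc_upd ennreal_mult[symmetric])
    also have "\<dots> = ennreal (K c v y * W (Suc c) y) * (\<integral>\<^sup>+x. ennreal (chain_tail W K N (Suc c) (x(sw_particle (Suc c) := y))) \<partial>PiM ?J (\<lambda>_. lborel))"
      by (rule nn_integral_cmult) measurable
    also have "\<dots> = ennreal (K c v y * W (Suc c) y) * bwd W K N d y"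
      using \<open>c < N\<close> \<open>N - Suc c = d\<close> by (subst Suc.hyps(1)[of "Suc c"]) simp_all
    finally show "(\<integral>\<^sup>+x. ennreal (chain_tail W K N c ((x(sw_particle (Suc c) := y))(sw_particle c := v))) \<partial>PiM ?J (\<lambda>_. lborel))
        = ennreal (K c v y) * (ennreal (W (Suc c) y) * bwd W K N d y)"
      using W_nonneg K_nonneg[OF \<open>c < N\<close>] by (simp add: ennreal_mult mult_ac)
  qed
  also have "\<dots> = bwd W K N (N - c) v"
  proof -
    have "N - c = Suc d" "N - Suc d = c" "N - d = Suc c" using \<open>Suc d = N - c\<close> by arith+
    then show ?thesis by simp
  qed
  finally show ?case .
qed

lemma chain_dens_marginal:
  assumes "c \<le> N"
  shows "(\<integral>\<^sup>+z. ennreal (chain_dens W K N (z(sw_particle c := v))) \<partial>PiM (sw_particle ` {0..N} - {sw_particle c}) (\<lambda>_. lborel))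
    = fwd_dens W K c v * bwd W K N (N - c) v"
proof -
  let ?I = "sw_particle ` {..<c}" and ?J = "sw_particle ` {Suc c..N}"
  have "{0..N} - {c} = {..<c} \<union> {Suc c..N}" using assms by auto
  then have IJ: "sw_particle ` {0..N} - {sw_particle c} = ?I \<union> ?J"
    by (metis image_Un image_empty image_insert image_set_diff inj_sw_particle)
  have [measurable]: "chain_head W K c \<in> borel_measurable (PiM (insert (sw_particle c) ?I) (\<lambda>_. lborel))"
    using assms by (intro chain_head_measurable) (auto simp: le_less)
  have [measurable]: "chain_tail W K N c \<in> borel_measurable (PiM (insert (sw_particle c) ?J) (\<lambda>_. lborel))"
    using assms by (intro chain_tail_measurable) auto
  have head_m: "(\<lambda>x. ennreal (chain_head W K c (x(sw_particle c := v)))) \<in> borel_measurable (PiM ?I (\<lambda>_. lborel))"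
    by (rule measurable_fun_upd_comp[where F="\<lambda>z. ennreal (chain_head W K c z)"]) measurable
  have tail_m: "(\<lambda>y. ennreal (chain_tail W K N c (y(sw_particle c := v)))) \<in> borel_measurable (PiM ?J (\<lambda>_. lborel))"
    by (rule measurable_fun_upd_comp[where F="\<lambda>z. ennreal (chain_tail W K N c z)"]) measurable
  have [measurable]: "chain_dens W K N \<in> borel_measurable (PiM (insert (sw_particle c) (?I \<union> ?J)) (\<lambda>_. lborel))"
    using IJ by (intro chain_dens_measurable) auto
  have "(\<lambda>z. ennreal (chain_dens W K N (z(sw_particle c := v)))) \<in> borel_measurable (PiM (?I \<union> ?J) (\<lambda>_. lborel))"
    by (rule measurable_fun_upd_comp[where F="\<lambda>z. ennreal (chain_dens W K N z)"]) measurable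
  then have "(\<integral>\<^sup>+z. ennreal (chain_dens W K N (z(sw_particle c := v))) \<partial>PiM (sw_particle ` {0..N} - {sw_particle c}) (\<lambda>_. lborel))
     = (\<integral>\<^sup>+x. \<integral>\<^sup>+y. ennreal (chain_dens W K N ((merge ?I ?J (x, y))(sw_particle c := v)))
          \<partial>PiM ?J (\<lambda>_. lborel) \<partial>PiM ?I (\<lambda>_. lborel))"
    unfolding IJ by (intro lborel_product.product_nn_integral_fold) auto
  also have "\<dots> = (\<integral>\<^sup>+x. \<integral>\<^sup>+y. ennreal (chain_head W K c (x(sw_particle c := v)) * W c v)
          * ennreal (chain_tail W K N c (y(sw_particle c := v))) \<partial>PiM ?J (\<lambda>_. lborel) \<partial>PiM ?I (\<lambda>_. lborel))"
  proof (intro nn_integral_cong)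
    fix x y :: "particle \<Rightarrow> real"
    let ?z = "(merge ?I ?J (x, y))(sw_particle c := v)"
    have "chain_head W K c ?z = chain_head W K c (x(sw_particle c := v))"
      by (rule chain_head_cong) (auto simp: merge_def)
    moreover have "chain_tail W K N c ?z = chain_tail W K N c (y(sw_particle c := v))"
      by (rule chain_tail_cong) (auto simp: merge_def)
    ultimately show "ennreal (chain_dens W K N ?z) = ennreal (chain_head W K c (x(sw_particle c := v)) * W c v)
        * ennreal (chain_tail W K N c (y(sw_particle c := v)))"
      using chain_dens_split[OF assms, where z="?z"] chain_head_nonneg[OF assms] chain_tail_nonneg W_nonneg
      by (simp add: ennreal_mult[symmetric])
  qed
  also have "\<dots> = (\<integral>\<^sup>+x. ennreal (chain_head W K c (x(sw_particle c := v))) \<partial>PiM ?I (\<lambda>_. lborel))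
      * ennreal (W c v) * bwd W K N (N - c) v"
    using head_m tail_m chain_head_nonneg[OF assms] W_nonneg
    by (simp add: nn_integral_cmult nn_integral_multc chain_tail_integral[OF assms] ennreal_mult)
  also have "\<dots> = fwd_dens W K c v * bwd W K N (N - c) v"
    by (simp add: chain_head_integral[OF assms] fwd_dens_def)
  finally show ?thesis .
qed

lemma chain_dens_integral:
  "(\<integral>\<^sup>+z. ennreal (chain_dens W K N z) \<partial>PiM (sw_particle ` {0..N}) (\<lambda>_. lborel))
    = (\<integral>\<^sup>+v. fwd_dens W K N v \<partial>lborel)"
proof -
  have ins: "sw_particle ` {0..N} = insert (sw_particle N) (sw_particle ` {0..N} - {sw_particle N})" by auto
  have "chain_dens W K N \<in> borel_measurable (PiM (insert (sw_particle N) (sw_particle ` {0..N} - {sw_particle N})) (\<lambda>_. lborel))"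
    by (intro chain_dens_measurable) auto
  then have "(\<integral>\<^sup>+z. ennreal (chain_dens W K N z) \<partial>PiM (sw_particle ` {0..N}) (\<lambda>_. lborel))
     = (\<integral>\<^sup>+v. \<integral>\<^sup>+z. ennreal (chain_dens W K N (z(sw_particle N := v))) \<partial>PiM (sw_particle ` {0..N} - {sw_particle N}) (\<lambda>_. lborel) \<partial>lborel)"
    by (subst ins, intro lborel_product.product_nn_integral_insert_rev) auto
  also have "\<dots> = (\<integral>\<^sup>+v. fwd_dens W K N v \<partial>lborel)"
    by (intro nn_integral_cong) (simp add: chain_dens_marginal)
  finally show ?thesis .
qed

lemma chain_dens_marginal_real:
  assumes "c \<le> N"
  shows "(\<integral>z. chain_dens W K N (z(sw_particle c := v)) \<partial>PiM (sw_particle ` {0..N} - {sw_particle c}) (\<lambda>_. lborel))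
    = enn2real (fwd_dens W K c v * bwd W K N (N - c) v)"
proof -
  have "chain_dens W K N \<in> borel_measurable (PiM (insert (sw_particle c) (sw_particle ` {0..N} - {sw_particle c})) (\<lambda>_. lborel))"
    using assms by (intro chain_dens_measurable) auto
  then have "(\<lambda>z. chain_dens W K N (z(sw_particle c := v)))
      \<in> borel_measurable (PiM (sw_particle ` {0..N} - {sw_particle c}) (\<lambda>_. lborel))"
    by (rule measurable_fun_upd_comp)
  then show ?thesis
    by (simp add: integral_eq_nn_integral chain_dens_nonneg chain_dens_marginal[OF assms])
qed

lemma chain_dens_integral_real:
  "(\<integral>z. chain_dens W K N z \<partial>PiM (sw_particle ` {0..N}) (\<lambda>_. lborel))
    = enn2real (\<integral>\<^sup>+v. fwd_dens W K N v \<partial>lborel)"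
  by (simp add: integral_eq_nn_integral chain_dens_nonneg chain_dens_measurable chain_dens_integral)

end

section \<open>The Sawtooth model as a chain\<close>

text \<open>Kernels of the Sawtooth chain: \<open>X\<^sub>i \<rightarrow> Y\<^sub>i\<close> carries \<open>f\<^sub>i (y - x)\<close> and \<open>Y\<^sub>i \<rightarrow> X\<^sub>i\<^sub>+\<^sub>1\<close>
  carries \<open>g\<^sub>i (y - x)\<close>; the constraints \<open>x \<le> y\<close> are absorbed into \<open>on_unit\<close>.\<close>
definition sw_kernel :: "(nat \<Rightarrow> real \<Rightarrow> real) \<Rightarrow> (nat \<Rightarrow> real \<Rightarrow> real) \<Rightarrow> nat \<Rightarrow> real \<Rightarrow> real \<Rightarrow> real" where
  "sw_kernel f g j u v =
     (if even j then on_unit (f (j div 2 + 1)) (v - u) else on_unit (g (j div 2 + 1)) (u - v))"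

definition unit_weight :: "nat \<Rightarrow> real \<Rightarrow> real" where
  "unit_weight j v = indicator {0..1} v"

text \<open>With \<open>cut_weight js t\<close> in place of \<open>unit_weight\<close> the chain integrates to the numerator of
  the CDF of particle \<open>js\<close> at \<open>t\<close>.\<close>
definition cut_weight :: "nat \<Rightarrow> real \<Rightarrow> nat \<Rightarrow> real \<Rightarrow> real" where
  "cut_weight js t j v = indicator {0..1} v * (if j = js then indicator {..t} v else 1)"

lemma cut_weight_le: "cut_weight js t j v \<le> unit_weight j v"
  unfolding cut_weight_def unit_weight_def by (auto simp: indicator_def)

lemma cut_weight_eq: "j \<noteq> js \<Longrightarrow> cut_weight js t j = unit_weight j"
  unfolding cut_weight_def unit_weight_def by (auto simp: fun_eq_iff)

lemma convex_sawtooth_factors: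
  assumes "convex_sawtooth f g n" "j < 2 * n"
  shows "sw_admissible (f (j div 2 + 1)) \<and> sw_admissible (g (j div 2 + 1)) \<and>
         sw_logconcave (f (j div 2 + 1)) \<and> sw_logconcave (g (j div 2 + 1))"
proof -
  have "j div 2 + 1 \<in> {1..n}" using assms(2) by auto
  then show ?thesis using assms(1) unfolding convex_sawtooth_def by blast
qed

lemma sw_kernel_nonneg:
  assumes "convex_sawtooth f g n" "j < 2 * n"
  shows "0 \<le> sw_kernel f g j u v"
  using convex_sawtooth_factors[OF assms] unfolding sw_kernel_def by (simp add: on_unit_nonneg)

lemma sw_kernel_measurable:
  assumes "convex_sawtooth f g n" "j < 2 * n"
  shows "case_prod (sw_kernel f g j) \<in> borel_measurable (lborel \<Otimes>\<^sub>M lborel)"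
proof -
  have [measurable]: "on_unit (f (j div 2 + 1)) \<in> borel_measurable borel" "on_unit (g (j div 2 + 1)) \<in> borel_measurable borel"
    using convex_sawtooth_factors[OF assms] by (auto intro: on_unit_measurable)
  show ?thesis unfolding sw_kernel_def by measurable
qed

lemma sw_kernel_bounded:
  assumes "convex_sawtooth f g n" "j < 2 * n"
  shows "\<exists>M. \<forall>u v. sw_kernel f g j u v \<le> M"
proof -
  obtain M1 M2 where "\<And>x. on_unit (f (j div 2 + 1)) x \<le> M1" "\<And>x. on_unit (g (j div 2 + 1)) x \<le> M2"
    using convex_sawtooth_factors[OF assms] on_unit_bounded by meson
  then have "\<forall>u v. sw_kernel f g j u v \<le> max M1 M2" unfolding sw_kernel_def by (simp add: le_max_iff_disj)
  then show ?thesis by blast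
qed

lemma sw_kernel_tp2:
  assumes "convex_sawtooth f g n" "j < 2 * n" "u \<le> w" "v \<le> v'"
  shows "sw_kernel f g j u v' * sw_kernel f g j w v \<le> sw_kernel f g j u v * sw_kernel f g j w v'"
proof (cases "even j")
  case True
  let ?\<phi> = "f (j div 2 + 1)"
  have "on_unit ?\<phi> (v - w) * on_unit ?\<phi> (v' - u) \<le> on_unit ?\<phi> (v - u) * on_unit ?\<phi> (v' - w)"
    using convex_sawtooth_factors[OF assms(1,2)] assms(3,4) by (intro logconcave_on_unit_mult_le) auto
  then show ?thesis using True unfolding sw_kernel_def by (simp add: mult.commute)
next
  case False
  let ?\<phi> = "g (j div 2 + 1)"
  have "on_unit ?\<phi> (u - v') * on_unit ?\<phi> (w - v) \<le> on_unit ?\<phi> (u - v) * on_unit ?\<phi> (w - v')"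
    using convex_sawtooth_factors[OF assms(1,2)] assms(3,4) by (intro logconcave_on_unit_mult_le) auto
  then show ?thesis using False unfolding sw_kernel_def by (simp add: mult.commute)
qed

lemma chain_model_sawtooth:
  assumes "convex_sawtooth f g n" "N \<le> 2 * n"
    and "\<And>j. W j \<in> borel_measurable lborel" "\<And>j x. 0 \<le> W j x"
  shows "chain_model W (sw_kernel f g) N"
  by unfold_locales (use assms sw_kernel_measurable sw_kernel_nonneg in auto)

lemma chain_model_unit_weight: "convex_sawtooth f g n \<Longrightarrow> N \<le> 2 * n \<Longrightarrow> chain_model unit_weight (sw_kernel f g) N"
  by (rule chain_model_sawtooth) (auto simp: unit_weight_def[abs_def])

lemma chain_model_cut_weight: "convex_sawtooth f g n \<Longrightarrow> N \<le> 2 * n \<Longrightarrow> chain_model (cut_weight js t) (sw_kernel f g) N"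
proof (rule chain_model_sawtooth)
  show "cut_weight js t j \<in> borel_measurable lborel" for j
    unfolding cut_weight_def by (cases "j = js") simp_all
qed (auto simp: cut_weight_def)

lemma sw_parts_eq_image: "sw_parts m h = sw_particle ` {0..2 * m + of_bool h}"
proof (intro equalityI subsetI)
  fix p assume "p \<in> sw_parts m h"
  then consider (x) i where "p = XP (Suc i)" "i \<le> m" | (y) i where "p = YP (Suc i)" "i < m"
    | (last) "h" "p = YP (Suc m)"
    unfolding sw_parts_def by (auto split: if_splits) (metis Suc_le_D Suc_le_mono Suc_less_eq2 le_simps(2))+
  then show "p \<in> sw_particle ` {0..2 * m + of_bool h}"
  proof cases
    case x
    then show ?thesis by (intro rev_image_eqI[of "2 * i"]) auto
  next
    case y
    then show ?thesis by (intro rev_image_eqI[of "Suc (2 * i)"]) auto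
  next
    case last
    then show ?thesis by (intro rev_image_eqI[of "Suc (2 * m)"]) auto
  qed
next
  fix p assume "p \<in> sw_particle ` {0..2 * m + of_bool h}"
  then obtain j where j: "p = sw_particle j" "j \<le> 2 * m + of_bool h" by auto
  show "p \<in> sw_parts m h"
  proof (cases "even j")
    case True
    then obtain k where k: "j = 2 * k" by (auto elim: evenE)
    then have "k \<le> m" using j by (cases h) auto
    then show ?thesis using j k unfolding sw_parts_def by auto
  next
    case False
    then obtain k where k: "j = Suc (2 * k)" by (auto elim: oddE)
    then show ?thesis using j unfolding sw_parts_def by (cases "k < m") (auto split: if_splits)
  qed
qed

lemma prod_lessThan_double:
  fixes F :: "nat \<Rightarrow> 'a :: comm_monoid_mult"
  shows "(\<Prod>j<2 * m. F j) = (\<Prod>k<m. F (2 * k) * F (Suc (2 * k)))"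
proof (induction m)
  case (Suc m)
  have "(\<Prod>j<2 * Suc m. F j) = (\<Prod>j<2 * m. F j) * (F (2 * m) * F (Suc (2 * m)))"
    by (simp add: mult_ac)
  then show ?case using Suc by simp
qed simp

lemma sw_kernel_pair:
  assumes "x \<in> {0..1}" "y \<in> {0..1}" "x' \<in> {0..1}"
  shows "sw_kernel f g (2 * k) x y * sw_kernel f g (Suc (2 * k)) y x'
    = (if x \<le> y \<and> x' \<le> y then f (Suc k) (y - x) * g (Suc k) (y - x') else 0)"
  using assms unfolding sw_kernel_def on_unit_def by auto

lemma sw_kernel_last:
  assumes "x \<in> {0..1}" "y \<in> {0..1}"
  shows "sw_kernel f g (2 * m) x y = (if x \<le> y then f (m + 1) (y - x) else 0)"
  using assms unfolding sw_kernel_def on_unit_def by auto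

lemma sw_dens_eq_chain_dens:
  "sw_dens f g m h z = chain_dens unit_weight (sw_kernel f g) (2 * m + of_bool h) z"
proof -
  let ?N = "2 * m + of_bool h"
  let ?K = "\<lambda>j. sw_kernel f g j (z (sw_particle j)) (z (sw_particle (Suc j)))"
  have weights: "(\<Prod>p\<in>sw_parts m h. indicator {0..1} (z p)) = (\<Prod>j\<in>{0..?N}. unit_weight j (z (sw_particle j)))"
    unfolding sw_parts_eq_image unit_weight_def by (subst prod.reindex) (auto intro: inj_on_subset[OF inj_sw_particle])
  show ?thesis
  proof (cases "\<forall>j\<le>?N. z (sw_particle j) \<in> {0..1}")
    case False
    then obtain j where "j \<le> ?N" "z (sw_particle j) \<notin> {0..1}" by auto
    then have "(\<Prod>j\<in>{0..?N}. unit_weight j (z (sw_particle j))) = 0"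
      by (intro prod_zero bexI[of _ j]) (auto simp: unit_weight_def)
    then show ?thesis unfolding sw_dens_def chain_dens_def weights by simp
  next
    case True
    let ?pair = "\<lambda>i. if z (XP i) \<le> z (YP i) \<and> z (XP (i+1)) \<le> z (YP i)
                      then f i (z (YP i) - z (XP i)) * g i (z (YP i) - z (XP (i+1))) else 0"
    have "(\<Prod>i\<in>{1..m}. ?pair i) = (\<Prod>k<m. ?pair (Suc k))"
      using prod.atLeast1_atMost_eq[of ?pair m] by simp
    also have "\<dots> = (\<Prod>k<m. ?K (2 * k) * ?K (Suc (2 * k)))"
    proof (intro prod.cong refl)
      fix k assume "k \<in> {..<m}"
      have next_X: "sw_particle (Suc (Suc (2 * k))) = XP (Suc (Suc k))"
        using sw_particle_even[of "Suc k"] by simp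
      moreover have "z (XP (Suc k)) \<in> {0..1}" "z (YP (Suc k)) \<in> {0..1}" "z (XP (Suc (Suc k))) \<in> {0..1}"
        using \<open>k \<in> {..<m}\<close> True[rule_format, of "2 * k"] True[rule_format, of "Suc (2 * k)"]
          True[rule_format, of "Suc (Suc (2 * k))"] next_X by auto
      ultimately show "?pair (Suc k) = ?K (2 * k) * ?K (Suc (2 * k))"
        by (simp add: sw_kernel_pair)
    qed
    also have "\<dots> = (\<Prod>j<2 * m. ?K j)" by (rule prod_lessThan_double[symmetric])
    finally have pairs: "(\<Prod>i\<in>{1..m}. ?pair i) = (\<Prod>j<2 * m. ?K j)" .
    have "(if h then (if z (XP (m+1)) \<le> z (YP (m+1)) then f (m+1) (z (YP (m+1)) - z (XP (m+1))) else 0) else 1)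
        = (\<Prod>j\<in>{2 * m..<?N}. ?K j)"
      using True[rule_format, of "2 * m"] True[rule_format, of "Suc (2 * m)"] by (simp add: sw_kernel_last)
    moreover have "(\<Prod>j<?N. ?K j) = (\<Prod>j<2 * m. ?K j) * (\<Prod>j\<in>{2 * m..<?N}. ?K j)"
      by (simp add: prod.atLeastLessThan_concat[of 0 "2 * m" ?N, symmetric] atLeast0LessThan)
    ultimately show ?thesis unfolding sw_dens_def chain_dens_def weights pairs by (simp add: mult.assoc)
  qed
qed

lemma chain_dens_cut_weight:
  assumes "js \<le> N"
  shows "indicator {..t} (z (sw_particle js)) * chain_dens unit_weight K N z = chain_dens (cut_weight js t) K N z"
proof -
  have "(\<Prod>j\<in>{0..N}. cut_weight js t j (z (sw_particle j)))
      = (\<Prod>j\<in>{0..N}. unit_weight j (z (sw_particle j)) * (if j = js then indicator {..t} (z (sw_particle js)) else 1))"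
    unfolding cut_weight_def unit_weight_def by (intro prod.cong) auto
  also have "\<dots> = (\<Prod>j\<in>{0..N}. unit_weight j (z (sw_particle j))) * indicator {..t} (z (sw_particle js))"
    using assms by (simp add: prod.distrib)
  finally show ?thesis unfolding chain_dens_def by (simp add: mult_ac)
qed

lemma sw_marg_eq:
  assumes "convex_sawtooth f g n" "c \<le> 2 * n"
  shows "sw_marg f g n False (sw_particle c) v
    = enn2real (fwd_dens unit_weight (sw_kernel f g) c v * bwd unit_weight (sw_kernel f g) (2 * n) (2 * n - c) v)"
proof -
  interpret chain_model unit_weight "sw_kernel f g" "2 * n"
    using assms(1) by (rule chain_model_unit_weight) simp
  show ?thesis
    unfolding sw_marg_def sw_parts_eq_image sw_dens_eq_chain_dens using chain_dens_marginal_real[OF assms(2)] by simp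
qed

lemma sw_cond_cdf_eq:
  assumes "convex_sawtooth f g n" "js \<le> c" "c \<le> 2 * n"
  shows "sw_cond_cdf f g n False (sw_particle js) (sw_particle c) v t
    = enn2real (fwd_dens (cut_weight js t) (sw_kernel f g) c v * bwd unit_weight (sw_kernel f g) (2 * n) (2 * n - c) v)
    / enn2real (fwd_dens unit_weight (sw_kernel f g) c v * bwd unit_weight (sw_kernel f g) (2 * n) (2 * n - c) v)"
proof -
  interpret chain_model "cut_weight js t" "sw_kernel f g" "2 * n"
    using assms(1) by (rule chain_model_cut_weight) simp
  have "bwd (cut_weight js t) (sw_kernel f g) (2 * n) (2 * n - c) v = bwd unit_weight (sw_kernel f g) (2 * n) (2 * n - c) v"
    using assms(2,3) by (intro bwd_cong) (auto simp: cut_weight_eq)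
  moreover have "(\<integral>z. indicator {..t} ((z(sw_particle c := v)) (sw_particle js)) * sw_dens f g n False (z(sw_particle c := v))
        \<partial>PiM (sw_parts n False - {sw_particle c}) (\<lambda>_. lborel))
      = enn2real (fwd_dens (cut_weight js t) (sw_kernel f g) c v * bwd (cut_weight js t) (sw_kernel f g) (2 * n) (2 * n - c) v)"
    unfolding sw_parts_eq_image sw_dens_eq_chain_dens of_bool_eq(1) add_0_right
      chain_dens_cut_weight[OF order.trans[OF assms(2,3)]]
    by (rule chain_dens_marginal_real[OF assms(3)])
  ultimately show ?thesis unfolding sw_cond_cdf_def sw_marg_eq[OF assms(1,3)] by simp
qed

lemma sw_cdf_eq:
  assumes "convex_sawtooth f g n" "2 * m + of_bool h \<le> 2 * n" "js \<le> 2 * m + of_bool h"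
  shows "sw_cdf f g m h (sw_particle js) t
    = enn2real (\<integral>\<^sup>+v. fwd_dens (cut_weight js t) (sw_kernel f g) (2 * m + of_bool h) v \<partial>lborel)
    / enn2real (\<integral>\<^sup>+v. fwd_dens unit_weight (sw_kernel f g) (2 * m + of_bool h) v \<partial>lborel)"
proof -
  let ?N = "2 * m + of_bool h"
  interpret cut: chain_model "cut_weight js t" "sw_kernel f g" ?N by (rule chain_model_cut_weight[OF assms(1,2)])
  interpret unit: chain_model unit_weight "sw_kernel f g" ?N by (rule chain_model_unit_weight[OF assms(1,2)])
  show ?thesis
    unfolding sw_cdf_def sw_mass_def sw_parts_eq_image sw_dens_eq_chain_dens chain_dens_cut_weight[OF assms(3)]
      cut.chain_dens_integral_real unit.chain_dens_integral_real ..
qed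

section \<open>Stochastic monotonicity\<close>

lemma ratio_antimono_cut_weight:
  "ratio_antimono (\<lambda>v. ennreal (cut_weight js t js v)) (\<lambda>v. ennreal (unit_weight js v))"
  unfolding ratio_antimono_def cut_weight_def unit_weight_def by (auto simp: indicator_def)

lemma ratio_antimono_fwd_dens_cut:
  assumes conv: "convex_sawtooth f g n" and "js \<le> c" "c \<le> 2 * n"
  shows "ratio_antimono (fwd_dens (cut_weight js t) (sw_kernel f g) c) (fwd_dens unit_weight (sw_kernel f g) c)"
  using assms(2,3)
proof (induction c rule: dec_induct)
  case base
  have "fwd (cut_weight js t) (sw_kernel f g) js = fwd unit_weight (sw_kernel f g) js"
    by (intro ext fwd_cong) (simp add: cut_weight_eq)
  then show ?case
    using ratio_antimono_mult[OF ratio_antimono_cut_weight, of js t "fwd unit_weight (sw_kernel f g) js"]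
    by (simp add: fwd_dens_def[abs_def] mult.commute)
next
  case (step k)
  interpret cut: chain_model "cut_weight js t" "sw_kernel f g" "2 * n" by (rule chain_model_cut_weight[OF conv]) simp
  interpret unit: chain_model unit_weight "sw_kernel f g" "2 * n" by (rule chain_model_unit_weight[OF conv]) simp
  have "k < 2 * n" using step by simp
  have weight: "cut_weight js t (Suc k) = unit_weight (Suc k)" using step by (simp add: cut_weight_eq)
  show ?case
    unfolding fwd_dens_Suc[abs_def] weight using \<open>k < 2 * n\<close> step.IH
    by (intro ratio_antimono_mult ratio_antimono_kernel_integral cut.fwd_dens_measurable unit.fwd_dens_measurable
        sw_kernel_measurable[OF conv] sw_kernel_nonneg[OF conv] sw_kernel_tp2[OF conv]) auto
qed

lemma sw_cond_cdf_antimono: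
  assumes conv: "convex_sawtooth f g n" and "js \<le> c" "c \<le> 2 * n" "v1 \<le> v2"
    and pos1: "0 < sw_marg f g n False (sw_particle c) v1" and pos2: "0 < sw_marg f g n False (sw_particle c) v2"
  shows "sw_cond_cdf f g n False (sw_particle js) (sw_particle c) v2 t
    \<le> sw_cond_cdf f g n False (sw_particle js) (sw_particle c) v1 t"
proof -
  define A where "A = fwd_dens (cut_weight js t) (sw_kernel f g) c"
  define B where "B = fwd_dens unit_weight (sw_kernel f g) c"
  define w where "w v = bwd unit_weight (sw_kernel f g) (2 * n) (2 * n - c) v" for v
  have cdf: "sw_cond_cdf f g n False (sw_particle js) (sw_particle c) v t = enn2real (A v * w v) / enn2real (B v * w v)" for v
    unfolding sw_cond_cdf_eq[OF conv assms(2,3)] A_def B_def w_def ..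
  have marg: "sw_marg f g n False (sw_particle c) v = enn2real (B v * w v)" for v
    unfolding sw_marg_eq[OF conv assms(3)] B_def w_def ..
  have AB: "A v \<le> B v" for v
    unfolding A_def B_def by (intro fwd_dens_mono cut_weight_le)
  have "A v2 * B v1 \<le> A v1 * B v2"
    using ratio_antimono_fwd_dens_cut[OF conv assms(2,3)] \<open>v1 \<le> v2\<close>
    unfolding ratio_antimono_def A_def B_def by auto
  then have "(A v2 * w v2) * (B v1 * w v1) \<le> (A v1 * w v1) * (B v2 * w v2)"
    using mult_right_mono[of "A v2 * B v1" "A v1 * B v2" "w v1 * w v2"] by (simp add: mult_ac)
  then have "enn2real (A v2 * w v2) / enn2real (B v2 * w v2) \<le> enn2real (A v1 * w v1) / enn2real (B v1 * w v1)"
    by (rule enn2real_ratio_le) (use AB pos1 marg in \<open>auto intro: mult_right_mono\<close>)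
  then show ?thesis unfolding cdf .
qed

lemma sw_cond_cdf_next_eq:
  fixes v :: real
  assumes conv: "convex_sawtooth f g n" and "js \<le> c" "Suc c \<le> 2 * n"
  defines "w \<equiv> ennreal (unit_weight (Suc c) v) * bwd unit_weight (sw_kernel f g) (2 * n) (2 * n - Suc c) v"
  shows "sw_cond_cdf f g n False (sw_particle js) (sw_particle (Suc c)) v t
      = enn2real ((\<integral>\<^sup>+u. ennreal (sw_kernel f g c u v) * fwd_dens (cut_weight js t) (sw_kernel f g) c u \<partial>lborel) * w)
      / enn2real ((\<integral>\<^sup>+u. ennreal (sw_kernel f g c u v) * fwd_dens unit_weight (sw_kernel f g) c u \<partial>lborel) * w)"
    and "sw_marg f g n False (sw_particle (Suc c)) v
      = enn2real ((\<integral>\<^sup>+u. ennreal (sw_kernel f g c u v) * fwd_dens unit_weight (sw_kernel f g) c u \<partial>lborel) * w)"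
proof -
  have "js \<le> Suc c" using assms(2) by simp
  have weight: "cut_weight js t (Suc c) = unit_weight (Suc c)" using assms(2) by (simp add: cut_weight_eq)
  show "sw_cond_cdf f g n False (sw_particle js) (sw_particle (Suc c)) v t
      = enn2real ((\<integral>\<^sup>+u. ennreal (sw_kernel f g c u v) * fwd_dens (cut_weight js t) (sw_kernel f g) c u \<partial>lborel) * w)
      / enn2real ((\<integral>\<^sup>+u. ennreal (sw_kernel f g c u v) * fwd_dens unit_weight (sw_kernel f g) c u \<partial>lborel) * w)"
    unfolding sw_cond_cdf_eq[OF conv \<open>js \<le> Suc c\<close> assms(3)] w_def fwd_dens_Suc weight mult.assoc ..
  show "sw_marg f g n False (sw_particle (Suc c)) v
      = enn2real ((\<integral>\<^sup>+u. ennreal (sw_kernel f g c u v) * fwd_dens unit_weight (sw_kernel f g) c u \<partial>lborel) * w)"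
    unfolding sw_marg_eq[OF conv assms(3)] w_def fwd_dens_Suc mult.assoc ..
qed

lemma fwd_dens_weight_support:
  assumes "u \<notin> {0..1}"
  shows "fwd_dens (cut_weight js t) K c u = 0 \<and> fwd_dens unit_weight K c u = 0"
  using assms unfolding fwd_dens_def cut_weight_def unit_weight_def by simp

text \<open>Conditioning on the upper particle \<open>Y\<^sub>m\<^sub>+\<^sub>1 = y\<close> reweights the truncated model ending in \<open>X\<^sub>m\<^sub>+\<^sub>1\<close>
  by \<open>f\<^sub>m\<^sub>+\<^sub>1 (y - x)\<close>, which is nonincreasing in \<open>x\<close>; Chebyshev's inequality does the rest.\<close>
lemma sw_cdf_le_cond_cdf_upper:
  assumes conv: "convex_sawtooth f g n" and js: "js \<le> 2 * m" and "m < n"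
    and y: "y \<in> {0..1}" and pos: "0 < sw_marg f g n False (sw_particle (Suc (2 * m))) y"
  shows "sw_cdf f g m False (sw_particle js) t \<le> sw_cond_cdf f g n False (sw_particle js) (sw_particle (Suc (2 * m))) y t"
proof -
  let ?K = "sw_kernel f g"
  define A where "A = fwd_dens (cut_weight js t) ?K (2 * m)"
  define B where "B = fwd_dens unit_weight ?K (2 * m)"
  define p where "p u = ennreal (?K (2 * m) u y)" for u
  define w where "w = ennreal (unit_weight (Suc (2 * m)) y) * bwd unit_weight ?K (2 * n) (2 * n - Suc (2 * m)) y"
  interpret cut: chain_model "cut_weight js t" ?K "2 * n" by (rule chain_model_cut_weight[OF conv]) simp
  interpret unit: chain_model unit_weight ?K "2 * n" by (rule chain_model_unit_weight[OF conv]) simp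
  have "2 * m < 2 * n" using \<open>m < n\<close> by simp
  have [measurable]: "A \<in> borel_measurable lborel" "B \<in> borel_measurable lborel"
    unfolding A_def B_def using \<open>2 * m < 2 * n\<close>
    by (intro cut.fwd_dens_measurable unit.fwd_dens_measurable; simp)+
  have [measurable]: "case_prod (?K (2 * m)) \<in> borel_measurable (lborel \<Otimes>\<^sub>M lborel)"
    using sw_kernel_measurable[OF conv \<open>2 * m < 2 * n\<close>] .
  have [measurable]: "p \<in> borel_measurable lborel" unfolding p_def by measurable
  have cdf: "sw_cdf f g m False (sw_particle js) t = enn2real (\<integral>\<^sup>+u. A u \<partial>lborel) / enn2real (\<integral>\<^sup>+u. B u \<partial>lborel)"
    using sw_cdf_eq[OF conv, of m False js t] js \<open>m < n\<close> by (simp add: A_def B_def)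
  have cond: "sw_cond_cdf f g n False (sw_particle js) (sw_particle (Suc (2 * m))) y t
      = enn2real ((\<integral>\<^sup>+u. p u * A u \<partial>lborel) * w) / enn2real ((\<integral>\<^sup>+u. p u * B u \<partial>lborel) * w)"
    and marg: "sw_marg f g n False (sw_particle (Suc (2 * m))) y = enn2real ((\<integral>\<^sup>+u. p u * B u \<partial>lborel) * w)"
    using sw_cond_cdf_next_eq(1)[OF conv js, where v=y and t=t] sw_cond_cdf_next_eq(2)[OF conv js, where v=y] \<open>m < n\<close> unfolding A_def B_def p_def w_def by simp_all
  have cheb: "(\<integral>\<^sup>+u. A u \<partial>lborel) * (\<integral>\<^sup>+u. p u * B u \<partial>lborel) \<le> (\<integral>\<^sup>+u. p u * A u \<partial>lborel) * (\<integral>\<^sup>+u. B u \<partial>lborel)"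
  proof (rule chebyshev_antimono_weight)
    show "ratio_antimono A B"
      unfolding A_def B_def using js \<open>2 * m < 2 * n\<close> by (intro ratio_antimono_fwd_dens_cut[OF conv]) auto
    show "A u = 0 \<and> B u = 0" if "u \<notin> {0..1}" for u
      unfolding A_def B_def using that by (rule fwd_dens_weight_support)
    show "p w \<le> p u" if "0 \<le> u" "u < w" "w \<le> 1" for u w
      using convex_sawtooth_factors[OF conv \<open>2 * m < 2 * n\<close>] that y
      unfolding p_def sw_kernel_def by (auto intro!: ennreal_leI on_unit_shift_antimono)
  qed measurable
  have AB: "A u \<le> B u" for u unfolding A_def B_def by (intro fwd_dens_mono cut_weight_le)
  have "(\<integral>\<^sup>+u. A u \<partial>lborel) * ((\<integral>\<^sup>+u. p u * B u \<partial>lborel) * w)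
      \<le> ((\<integral>\<^sup>+u. p u * A u \<partial>lborel) * w) * (\<integral>\<^sup>+u. B u \<partial>lborel)"
    using mult_right_mono[OF cheb, of w] by (simp add: mult_ac)
  then show ?thesis
    unfolding cdf cond
    by (rule enn2real_ratio_le) (use AB pos marg in \<open>auto intro!: nn_integral_mono mult_right_mono mult_left_mono\<close>)
qed

text \<open>Symmetrically, conditioning on \<open>X\<^sub>m\<^sub>+\<^sub>2 = x\<close> reweights the truncated model ending in \<open>Y\<^sub>m\<^sub>+\<^sub>1\<close>
  by \<open>g\<^sub>m\<^sub>+\<^sub>1 (y - x)\<close>, which is nondecreasing in \<open>y\<close>.\<close>
lemma sw_cond_cdf_lower_le_cdf:
  assumes conv: "convex_sawtooth f g n" and js: "js \<le> Suc (2 * m)" and "m < n"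
    and x: "x \<in> {0..1}" and pos: "0 < sw_marg f g n False (sw_particle (Suc (Suc (2 * m)))) x"
  shows "sw_cond_cdf f g n False (sw_particle js) (sw_particle (Suc (Suc (2 * m)))) x t \<le> sw_cdf f g m True (sw_particle js) t"
proof -
  let ?K = "sw_kernel f g"
  define A where "A = fwd_dens (cut_weight js t) ?K (Suc (2 * m))"
  define B where "B = fwd_dens unit_weight ?K (Suc (2 * m))"
  define p where "p u = ennreal (?K (Suc (2 * m)) u x)" for u
  define w where "w = ennreal (unit_weight (Suc (Suc (2 * m))) x) * bwd unit_weight ?K (2 * n) (2 * n - Suc (Suc (2 * m))) x"
  interpret cut: chain_model "cut_weight js t" ?K "2 * n" by (rule chain_model_cut_weight[OF conv]) simp
  interpret unit: chain_model unit_weight ?K "2 * n" by (rule chain_model_unit_weight[OF conv]) simp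
  have "Suc (2 * m) < 2 * n" using \<open>m < n\<close> by simp
  have [measurable]: "A \<in> borel_measurable lborel" "B \<in> borel_measurable lborel"
    unfolding A_def B_def using \<open>Suc (2 * m) < 2 * n\<close>
    by (intro cut.fwd_dens_measurable unit.fwd_dens_measurable; simp)+
  have [measurable]: "case_prod (?K (Suc (2 * m))) \<in> borel_measurable (lborel \<Otimes>\<^sub>M lborel)"
    using sw_kernel_measurable[OF conv \<open>Suc (2 * m) < 2 * n\<close>] .
  have [measurable]: "p \<in> borel_measurable lborel" unfolding p_def by measurable
  have cdf: "sw_cdf f g m True (sw_particle js) t = enn2real (\<integral>\<^sup>+u. A u \<partial>lborel) / enn2real (\<integral>\<^sup>+u. B u \<partial>lborel)"
    using sw_cdf_eq[OF conv, of m True js t] js \<open>m < n\<close> by (simp add: A_def B_def)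
  have cond: "sw_cond_cdf f g n False (sw_particle js) (sw_particle (Suc (Suc (2 * m)))) x t
      = enn2real ((\<integral>\<^sup>+u. p u * A u \<partial>lborel) * w) / enn2real ((\<integral>\<^sup>+u. p u * B u \<partial>lborel) * w)"
    and marg: "sw_marg f g n False (sw_particle (Suc (Suc (2 * m)))) x = enn2real ((\<integral>\<^sup>+u. p u * B u \<partial>lborel) * w)"
    using sw_cond_cdf_next_eq(1)[OF conv js, where v=x and t=t] sw_cond_cdf_next_eq(2)[OF conv js, where v=x] \<open>m < n\<close> unfolding A_def B_def p_def w_def by simp_all
  have cheb: "(\<integral>\<^sup>+u. p u * A u \<partial>lborel) * (\<integral>\<^sup>+u. B u \<partial>lborel) \<le> (\<integral>\<^sup>+u. A u \<partial>lborel) * (\<integral>\<^sup>+u. p u * B u \<partial>lborel)"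
  proof (rule chebyshev_mono_weight)
    show "ratio_antimono A B"
      unfolding A_def B_def using js \<open>Suc (2 * m) < 2 * n\<close> by (intro ratio_antimono_fwd_dens_cut[OF conv]) auto
    show "A u = 0 \<and> B u = 0" if "u \<notin> {0..1}" for u
      unfolding A_def B_def using that by (rule fwd_dens_weight_support)
    show "p u \<le> p w" if "0 \<le> u" "u < w" "w \<le> 1" for u w
      using convex_sawtooth_factors[OF conv \<open>Suc (2 * m) < 2 * n\<close>] that x
      unfolding p_def sw_kernel_def by (auto intro!: ennreal_leI on_unit_shift_mono)
  qed measurable
  have AB: "A u \<le> B u" for u unfolding A_def B_def by (intro fwd_dens_mono cut_weight_le)
  have "0 < enn2real (\<integral>\<^sup>+u. B u \<partial>lborel)"
  proof -
    have "(\<integral>\<^sup>+u. B u \<partial>lborel) < top"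
      unfolding B_def using \<open>Suc (2 * m) < 2 * n\<close>
      by (intro fwd_dens_integral_finite sw_kernel_bounded[OF conv]) (auto simp: unit_weight_def)
    moreover have "(\<integral>\<^sup>+u. B u \<partial>lborel) \<noteq> 0"
    proof
      assume "(\<integral>\<^sup>+u. B u \<partial>lborel) = 0"
      then have "AE u in lborel. B u = 0" by (simp add: nn_integral_0_iff_AE)
      then have "AE u in lborel. p u * B u = 0" by eventually_elim simp
      then have "(\<integral>\<^sup>+u. p u * B u \<partial>lborel) = 0" by (simp add: nn_integral_0_iff_AE)
      then show False using pos marg by simp
    qed
    ultimately show ?thesis by (simp add: enn2real_positive_iff less_top[symmetric] zero_less_iff_neq_zero)
  qed
  moreover have "((\<integral>\<^sup>+u. p u * A u \<partial>lborel) * w) * (\<integral>\<^sup>+u. B u \<partial>lborel)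
      \<le> (\<integral>\<^sup>+u. A u \<partial>lborel) * ((\<integral>\<^sup>+u. p u * B u \<partial>lborel) * w)"
    using mult_right_mono[OF cheb, of w] by (simp add: mult_ac)
  ultimately show ?thesis
    unfolding cdf cond
    by (intro enn2real_ratio_le) (use AB in \<open>auto intro!: nn_integral_mono mult_right_mono mult_left_mono\<close>)
qed

theorem mainTheorem6:
  fixes f g :: "nat \<Rightarrow> real \<Rightarrow> real" and n s r :: nat and t :: real
  assumes S: "convex_sawtooth f g n"
    and sr: "1 \<le> s" "s \<le> r"
    and t: "t \<in> {0..1}"
  shows
    "(r \<le> n + 1 \<longrightarrow>
       (\<forall>x1\<in>{0..1}. \<forall>x2\<in>{0..1}. x1 \<le> x2 \<longrightarrow>
          sw_marg f g n False (XP r) x1 > 0 \<longrightarrow> sw_marg f g n False (XP r) x2 > 0 \<longrightarrow>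
          sw_cond_cdf f g n False (XP s) (XP r) x2 t \<le> sw_cond_cdf f g n False (XP s) (XP r) x1 t))
   \<and> (r \<le> n \<longrightarrow>
       (\<forall>y1\<in>{0..1}. \<forall>y2\<in>{0..1}. y1 \<le> y2 \<longrightarrow>
          sw_marg f g n False (YP r) y1 > 0 \<longrightarrow> sw_marg f g n False (YP r) y2 > 0 \<longrightarrow>
          sw_cond_cdf f g n False (XP s) (YP r) y2 t \<le> sw_cond_cdf f g n False (XP s) (YP r) y1 t))
   \<and> (r \<le> n \<longrightarrow>
       (\<forall>y\<in>{0..1}. sw_marg f g n False (YP r) y > 0 \<longrightarrow>
          sw_cdf f g (r - 1) False (XP s) t \<le> sw_cond_cdf f g n False (XP s) (YP r) y t))
   \<and> (r \<le> n \<longrightarrow>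
       (\<forall>x\<in>{0..1}. sw_marg f g n False (XP (r + 1)) x > 0 \<longrightarrow>
          sw_cdf f g (r - 1) True (XP s) t \<ge> sw_cond_cdf f g n False (XP s) (XP (r + 1)) x t))"
proof -
  define m where "m = r - 1"
  have "r = Suc m" "Suc (Suc (2 * m)) = 2 * Suc m" using sr unfolding m_def by auto
  then have particles: "XP s = sw_particle (2 * (s - 1))" "XP r = sw_particle (2 * m)"
    "YP r = sw_particle (Suc (2 * m))" "XP (r + 1) = sw_particle (Suc (Suc (2 * m)))"
    using sr sw_particle_even[of "s - 1"] sw_particle_even[of "Suc m"] by simp_all
  have js: "2 * (s - 1) \<le> 2 * m" using sr unfolding m_def by simp
  show ?thesis
    unfolding particles m_def[symmetric]
    using sw_cond_cdf_antimono[OF S js] sw_cond_cdf_antimono[OF S le_SucI[OF js]]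
      sw_cdf_le_cond_cdf_upper[OF S js] sw_cond_cdf_lower_le_cdf[OF S le_SucI[OF js]] sr
    unfolding m_def by auto
qed

end
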